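(* In the $P$-dimensional classification setting described in the context, let $\delta\in(0,1)$ and $\gamma>0$, and suppose $\mathcal{D}^P_{\mathrm{pop}}\neq0$. If the training set size $M$ satisfies $M\ge\frac{128\ln(\frac2\delta)(\ln(\max_{\mathcal{J}\subseteq[N^P]}D_{\mathcal{J}}))^4}{\|\mathcal{D}^P_{\mathrm{pop}}\|^2\gamma^4}$, then with probability at least $1-\delta$: $|\mathrm{QE}(\mathcal{D}^P_{\mathrm{emp}};\mathcal{J})-\mathrm{QE}(\mathcal{D}^P_{\mathrm{pop}};\mathcal{J})|\le\gamma$ for all $\mathcal{J}\subseteq[N^P]$.
   Context: $P,N$ positive integers, $D_1,\ldots,D_{N^P}$ positive integers; norms are Frobenius. For $\mathcal{A}\in\mathbb{R}^{D_1\times\cdots\times D_{N^P}}$ and $\mathcal{J}\subseteq[N^P]$, $[\![\mathcal{A};\mathcal{J}]\!]$ is its matrix arrangement with rows indexed by axes $\mathcal{J}$, columns by the other axes; $D_{\mathcal{J}}:=\min\{\prod_{n\in\mathcal{J}}D_n,\prod_{n\notin\mathcal{J}}D_n\}$; $\mathrm{QE}(\mathcal{A};\mathcal{J}):=-\sum_d\rho_d\ln\rho_d$, $\rho_d=\sigma_d^2/\sum_{d'}\sigma_{d'}^2$ over the singular values of $[\![\mathcal{A};\mathcal{J}]\!]$ ($\mathrm{QE}(0;\mathcal{J})=0$). Fix a bijection $\mu:[N]^P\to[N^P]$. Classification setting: a distribution over pairs $(\{\mathbf{x}^{(\mathbf{n})}\}_{\mathbf{n}\in[N]^P},y)$ with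 $\mathbf{x}^{(\mathbf{n})}\in\mathbb{R}^{D_{\mu(\mathbf{n})}}$, $\|\mathbf{x}^{(\mathbf{n})}\|\le1$, $y\in\{1,-1\}$. $\mathcal{D}^P_{\mathrm{pop}}:=\mathbb{E}[y\cdot\otimes_{n=1}^{N^P}\mathbf{x}^{(\mu^{-1}(n))}]$; given $M$ i.i.d. samples $(\{\mathbf{x}^{(\mathbf{n},m)}\},y^{(m)})$, $\mathcal{D}^P_{\mathrm{emp}}:=\frac1M\sum_{m=1}^My^{(m)}\cdot\otimes_{n=1}^{N^P}\mathbf{x}^{(\mu^{-1}(n),m)}$. *)

theory Defs
  imports "HOL-Probability.Probability"
begin

definition svd_pos :: "'r set \<Rightarrow> 'c set \<Rightarrow> ('r \<Rightarrow> 'c \<Rightarrow> real) \<Rightarrow> real multiset \<Rightarrow> bool" where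
  "svd_pos Rs Cs A S \<longleftrightarrow>
     (\<exists>k (\<sigma>::nat \<Rightarrow> real) (u::nat \<Rightarrow> 'r \<Rightarrow> real) (v::nat \<Rightarrow> 'c \<Rightarrow> real).
        S = mset (map \<sigma> [0..<k]) \<and>
        (\<forall>d<k. \<sigma> d > 0) \<and>
        (\<forall>d<k. \<forall>d'<k. (\<Sum>r\<in>Rs. u d r * u d' r) = (if d = d' then 1 else 0)) \<and>
        (\<forall>d<k. \<forall>d'<k. (\<Sum>c\<in>Cs. v d c * v d' c) = (if d = d' then 1 else 0)) \<and>
        (\<forall>r\<in>Rs. \<forall>c\<in>Cs. A r c = (\<Sum>d<k. \<sigma> d * u d r * v d c)))"

definition singular_values :: "'r set \<Rightarrow> 'c set \<Rightarrow> ('r \<Rightarrow> 'c \<Rightarrow> real) \<Rightarrow> real multiset" where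
  "singular_values Rs Cs A =
     (let S = (THE S. svd_pos Rs Cs A S)
      in S + replicate_mset (min (card Rs) (card Cs) - size S) 0)"

definition QE_mat :: "'r set \<Rightarrow> 'c set \<Rightarrow> ('r \<Rightarrow> 'c \<Rightarrow> real) \<Rightarrow> real" where
  "QE_mat Rs Cs A =
     (let S = singular_values Rs Cs A; t = (\<Sum>s\<in>#S. s\<^sup>2)
      in if t = 0 then 0
         else - (\<Sum>s\<in>#S. (if s = 0 then 0 else (s\<^sup>2 / t) * ln (s\<^sup>2 / t))))"

text \<open>Tensor of order K with axis dimensions D 0, ..., D (K-1) (axes 0-based, i.e. axis n
  here is axis n+1 of the paper): a real function on multi-indices.\<close>

definition tidx :: "nat \<Rightarrow> (nat \<Rightarrow> nat) \<Rightarrow> (nat \<Rightarrow> nat) set" where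
  "tidx K D = PiE {0..<K} (\<lambda>n. {0..<D n})"

definition tnorm :: "nat \<Rightarrow> (nat \<Rightarrow> nat) \<Rightarrow> ((nat \<Rightarrow> nat) \<Rightarrow> real) \<Rightarrow> real" where
  "tnorm K D A = sqrt (\<Sum>i\<in>tidx K D. (A i)\<^sup>2)"

definition mat_rows :: "nat \<Rightarrow> (nat \<Rightarrow> nat) \<Rightarrow> nat set \<Rightarrow> (nat \<Rightarrow> nat) set" where
  "mat_rows K D J = PiE J (\<lambda>n. {0..<D n})"

definition mat_cols :: "nat \<Rightarrow> (nat \<Rightarrow> nat) \<Rightarrow> nat set \<Rightarrow> (nat \<Rightarrow> nat) set" where
  "mat_cols K D J = PiE ({0..<K} - J) (\<lambda>n. {0..<D n})"

definition mat_arr :: "nat set \<Rightarrow> ((nat \<Rightarrow> nat) \<Rightarrow> real) \<Rightarrow> (nat \<Rightarrow> nat) \<Rightarrow> (nat \<Rightarrow> nat) \<Rightarrow> real" where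
  "mat_arr J A = (\<lambda>r c. A (\<lambda>n. if n \<in> J then r n else c n))"

definition QE :: "nat \<Rightarrow> (nat \<Rightarrow> nat) \<Rightarrow> ((nat \<Rightarrow> nat) \<Rightarrow> real) \<Rightarrow> nat set \<Rightarrow> real" where
  "QE K D A J = QE_mat (mat_rows K D J) (mat_cols K D J) (mat_arr J A)"

definition DJ :: "nat \<Rightarrow> (nat \<Rightarrow> nat) \<Rightarrow> nat set \<Rightarrow> nat" where
  "DJ K D J = min (\<Prod>n\<in>J. D n) (\<Prod>n\<in>{0..<K} - J. D n)"

text \<open>Multi-indices [N]^P (0-based), and a data point: x :: multi-index => vector, y :: real.\<close>
definition grid :: "nat \<Rightarrow> nat \<Rightarrow> (nat \<Rightarrow> nat) set" where
  "grid N P = PiE {0..<P} (\<lambda>_. {0..<N})"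

definition data_tensor ::
  "nat \<Rightarrow> nat \<Rightarrow> ((nat \<Rightarrow> nat) \<Rightarrow> nat) \<Rightarrow> ((nat \<Rightarrow> nat) \<Rightarrow> nat \<Rightarrow> real) \<times> real
     \<Rightarrow> (nat \<Rightarrow> nat) \<Rightarrow> real" where
  "data_tensor N P \<mu> z = (\<lambda>i. snd z * (\<Prod>n<N ^ P. fst z (the_inv_into (grid N P) \<mu> n) (i n)))"

definition D_pop ::
  "nat \<Rightarrow> nat \<Rightarrow> ((nat \<Rightarrow> nat) \<Rightarrow> nat) \<Rightarrow> (((nat \<Rightarrow> nat) \<Rightarrow> nat \<Rightarrow> real) \<times> real) measure
     \<Rightarrow> (nat \<Rightarrow> nat) \<Rightarrow> real" where
  "D_pop N P \<mu> Dist = (\<lambda>i. \<integral>z. data_tensor N P \<mu> z i \<partial>Dist)"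

definition D_emp ::
  "nat \<Rightarrow> nat \<Rightarrow> ((nat \<Rightarrow> nat) \<Rightarrow> nat) \<Rightarrow> nat \<Rightarrow> (nat \<Rightarrow> ((nat \<Rightarrow> nat) \<Rightarrow> nat \<Rightarrow> real) \<times> real)
     \<Rightarrow> (nat \<Rightarrow> nat) \<Rightarrow> real" where
  "D_emp N P \<mu> M \<omega> = (\<lambda>i. (1 / real M) * (\<Sum>m<M. data_tensor N P \<mu> (\<omega> m) i))"

end

theory Submission
  imports Defs "HOL-Combinatorics.List_Permutation"
begin

(*
  The empirical tensor is close to the population tensor in Frobenius norm: an average of M
  independent vectors of norm at most 1 deviates from its mean by at most 1/sqrt M in expectation,
  and by McDiarmid's bounded-differences inequality it exceeds this by more than
  sqrt (2 ln (1/delta) / M) with probability at most delta.  Matricization is an isometry, so the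
  same bound holds for every arrangement [[A; J]].

  For two matrices at Frobenius distance d, Mirsky's inequality (a consequence of von Neumann's
  trace inequality) makes their normalized singular values close, hence the normalized squared
  singular values are close in l1 as probability vectors, with distance of order sqrt (d / ||B||).
  Fannes' continuity bound for the Shannon entropy then controls the difference of the
  entanglements by that distance times ln D_J, and the sample size is chosen to make this at
  most gamma.

  Since the singular values are defined through an SVD, existence (by greedily maximizing |A w|
  over unit vectors orthogonal to the ones already chosen) and uniqueness of the singular values
  (Mirsky's inequality with A = B) are proved first.
*)

section \<open>Singular value decomposition of finite real matrices\<close>

definition inner_on :: "'a set \<Rightarrow> ('a \<Rightarrow> real) \<Rightarrow> ('a \<Rightarrow> real) \<Rightarrow> real" where
  "inner_on R x y = (\<Sum>r\<in>R. x r * y r)"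

definition orthonormal_on :: "'a set \<Rightarrow> nat \<Rightarrow> (nat \<Rightarrow> 'a \<Rightarrow> real) \<Rightarrow> bool" where
  "orthonormal_on R k u \<longleftrightarrow> (\<forall>d<k. \<forall>d'<k. inner_on R (u d) (u d') = (if d = d' then 1 else 0))"

definition is_svd :: "'r set \<Rightarrow> 'c set \<Rightarrow> ('r \<Rightarrow> 'c \<Rightarrow> real) \<Rightarrow> nat \<Rightarrow> (nat \<Rightarrow> real)
   \<Rightarrow> (nat \<Rightarrow> 'r \<Rightarrow> real) \<Rightarrow> (nat \<Rightarrow> 'c \<Rightarrow> real) \<Rightarrow> bool" where
  "is_svd R C A k \<sigma> u v \<longleftrightarrow> (\<forall>d<k. \<sigma> d > 0) \<and> orthonormal_on R k u \<and> orthonormal_on C k v \<and>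
     (\<forall>r\<in>R. \<forall>c\<in>C. A r c = (\<Sum>d<k. \<sigma> d * u d r * v d c))"

definition mat_vec :: "'c set \<Rightarrow> ('r \<Rightarrow> 'c \<Rightarrow> real) \<Rightarrow> ('c \<Rightarrow> real) \<Rightarrow> 'r \<Rightarrow> real" where
  "mat_vec C A w = (\<lambda>r. \<Sum>c\<in>C. A r c * w c)"

lemma svd_pos_iff:
  "svd_pos R C A S \<longleftrightarrow> (\<exists>k \<sigma> u v. S = mset (map \<sigma> [0..<k]) \<and> is_svd R C A k \<sigma> u v)"
  unfolding svd_pos_def is_svd_def orthonormal_on_def inner_on_def by auto

lemma inner_on_commute: "inner_on R x y = inner_on R y x"
  unfolding inner_on_def by (simp add: mult.commute)

lemma inner_on_self_nonneg: "inner_on R x x \<ge> 0"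
  unfolding inner_on_def by (auto intro: sum_nonneg)

lemma inner_on_self_eq_0_iff:
  assumes "finite R"
  shows "inner_on R x x = 0 \<longleftrightarrow> (\<forall>r\<in>R. x r = 0)"
  unfolding inner_on_def using assms by (simp add: sum_nonneg_eq_0_iff)

lemma inner_on_sum_right:
  "inner_on R w (\<lambda>r. \<Sum>j<k. a j * x j r) = (\<Sum>j<k. a j * inner_on R w (x j))"
  unfolding inner_on_def by (simp add: sum_distrib_left sum.swap[of _ R] mult_ac)

lemma inner_on_sum_left:
  "inner_on R (\<lambda>r. \<Sum>j<k. a j * x j r) w = (\<Sum>j<k. a j * inner_on R (x j) w)"
  using inner_on_sum_right[where R = R and w = w and a = a and x = x and k = k]
  by (simp add: inner_on_commute)

lemma inner_on_restrict_left: "inner_on C (\<lambda>c. if c \<in> C then f c else 0) y = inner_on C f y"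
  unfolding inner_on_def by (rule sum.cong) auto

lemma inner_on_restrict_right: "inner_on C y (\<lambda>c. if c \<in> C then f c else 0) = inner_on C y f"
  unfolding inner_on_def by (rule sum.cong) auto

lemma inner_on_scale_self: "inner_on R (\<lambda>r. a * x r) (\<lambda>r. a * x r) = a\<^sup>2 * inner_on R x x"
  unfolding inner_on_def by (simp add: algebra_simps sum_distrib_left power2_eq_square)

lemma inner_on_lincomb_self:
  "inner_on R (\<lambda>r. a * x r + b * y r) (\<lambda>r. a * x r + b * y r)
     = a\<^sup>2 * inner_on R x x + 2 * a * b * inner_on R x y + b\<^sup>2 * inner_on R y y"
  unfolding inner_on_def by (simp add: algebra_simps sum.distrib sum_distrib_left power2_eq_square)

lemma inner_on_indicator_left:
  assumes "finite R" "r \<in> R"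
  shows "inner_on R (\<lambda>r'. if r' = r then 1 else 0) y = y r"
proof -
  have "inner_on R (\<lambda>r'. if r' = r then 1 else 0) y = (\<Sum>r'\<in>R. if r' = r then y r' else 0)"
    unfolding inner_on_def by (rule sum.cong) auto
  then show ?thesis using assms by simp
qed

lemma inner_on_orthonormal_sum:
  assumes "orthonormal_on R k x"
  shows "inner_on R (\<lambda>r. \<Sum>j<k. a j * x j r) (\<lambda>r. \<Sum>j<k. b j * x j r) = (\<Sum>j<k. a j * b j)"
proof -
  have "inner_on R (\<lambda>r. \<Sum>j<k. a j * x j r) (\<lambda>r. \<Sum>j<k. b j * x j r)
     = (\<Sum>j<k. a j * (\<Sum>i<k. b i * inner_on R (x j) (x i)))"
    by (simp add: inner_on_sum_left inner_on_sum_right)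
  also have "\<dots> = (\<Sum>j<k. a j * (\<Sum>i<k. if i = j then b j else 0))"
    using assms by (intro sum.cong refl arg_cong2[where f = "(*)"]) (auto simp: orthonormal_on_def)
  finally show ?thesis by simp
qed

lemma bessel_inequality:
  assumes "orthonormal_on R k x"
  shows "(\<Sum>j<k. (inner_on R w (x j))\<^sup>2) \<le> inner_on R w w"
proof -
  define a where "a j = inner_on R w (x j)" for j
  define p where "p = (\<lambda>r. \<Sum>j<k. a j * x j r)"
  have wp: "inner_on R w p = (\<Sum>j<k. (a j)\<^sup>2)"
    unfolding p_def inner_on_sum_right by (simp add: a_def power2_eq_square)
  have pp: "inner_on R p p = (\<Sum>j<k. (a j)\<^sup>2)"
    unfolding p_def using inner_on_orthonormal_sum[OF assms, of a a] by (simp add: power2_eq_square)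
  have "0 \<le> inner_on R (\<lambda>r. w r - p r) (\<lambda>r. w r - p r)" by (rule inner_on_self_nonneg)
  also have "\<dots> = inner_on R w w - 2 * inner_on R w p + inner_on R p p"
    unfolding inner_on_def by (simp add: algebra_simps sum_subtractf sum.distrib sum_distrib_left)
  finally show ?thesis using wp pp by (simp add: a_def)
qed

lemma orthonormal_on_card_le:
  assumes "finite R" "orthonormal_on R k x"
  shows "k \<le> card R"
proof -
  define e :: "'a \<Rightarrow> 'a \<Rightarrow> real" where "e r = (\<lambda>r'. if r' = r then 1 else 0)" for r
  have "real k = (\<Sum>j<k. inner_on R (x j) (x j))"
    using assms(2) by (simp add: orthonormal_on_def)
  also have "\<dots> = (\<Sum>r\<in>R. \<Sum>j<k. (inner_on R (e r) (x j))\<^sup>2)"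
    using assms(1) unfolding e_def
    by (simp add: inner_on_indicator_left inner_on_def[of R "x _" "x _"] sum.swap[of _ R] power2_eq_square)
  also have "\<dots> \<le> (\<Sum>r\<in>R. inner_on R (e r) (e r))"
    by (intro sum_mono bessel_inequality assms(2))
  also have "\<dots> = real (card R)"
    using assms(1) by (simp add: e_def inner_on_indicator_left)
  finally show ?thesis by simp
qed

lemma mat_vec_lincomb: "mat_vec C A (\<lambda>c. a * x c + b * y c) = (\<lambda>r. a * mat_vec C A x r + b * mat_vec C A y r)"
  unfolding mat_vec_def by (simp add: algebra_simps sum.distrib sum_distrib_left)

lemma mat_vec_scale: "mat_vec C A (\<lambda>c. a * x c) = (\<lambda>r. a * mat_vec C A x r)"
  unfolding mat_vec_def by (simp add: algebra_simps sum_distrib_left)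

lemma mat_vec_restrict: "mat_vec C A (\<lambda>c. if c \<in> C then f c else 0) = mat_vec C A f"
  unfolding mat_vec_def by (rule ext, rule sum.cong) auto

lemma eq_0_if_linear_le_quadratic:
  fixes b Q :: real
  assumes "\<And>t. 2 * t * b \<le> t\<^sup>2 * Q"
  shows "b = 0"
proof (rule ccontr)
  assume "b \<noteq> 0"
  define s where "s = \<bar>Q\<bar> + 1"
  have s: "s > 0" "Q < s" by (auto simp: s_def)
  have "2 * (b / s) * b \<le> (b / s)\<^sup>2 * Q" by (rule assms)
  then have "2 * s * b\<^sup>2 \<le> Q * b\<^sup>2"
    using s by (simp add: power2_eq_square field_simps)
  then have "2 * s \<le> Q" using \<open>b \<noteq> 0\<close> by simp
  then show False using s by linarith
qed

text \<open>Vectors supported on \<open>C\<close> of norm at most 1 lie in \<open>cube_on C\<close>, a compact set of the product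
  topology on \<open>'c \<Rightarrow> real\<close>; this is what makes maximizing \<open>\<parallel>A w\<parallel>\<close> possible for an arbitrary index type.\<close>

definition cube_on :: "'c set \<Rightarrow> ('c \<Rightarrow> real) set" where
  "cube_on C = PiE UNIV (\<lambda>c. if c \<in> C then {-1..1} else {0})"

definition unit_orth :: "'c set \<Rightarrow> nat \<Rightarrow> (nat \<Rightarrow> 'c \<Rightarrow> real) \<Rightarrow> ('c \<Rightarrow> real) set" where
  "unit_orth C k v = {w \<in> cube_on C. inner_on C w w = 1 \<and> (\<forall>d<k. inner_on C w (v d) = 0)}"

lemma continuous_on_coordinate [continuous_intros]: "continuous_on S (\<lambda>w::'a \<Rightarrow> real. w c)"
  by (rule continuous_on_subset[OF continuous_on_product_coordinates]) simp

lemma compact_cube_on: "compact (cube_on C)"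
proof -
  have "compactin (product_topology (\<lambda>i. euclidean) UNIV) (cube_on C)"
    unfolding cube_on_def compactin_PiE by auto
  then show ?thesis
    by (simp add: euclidean_product_topology compactin_euclidean_iff)
qed

lemma compact_unit_orth: "compact (unit_orth C k v)"
proof -
  have "unit_orth C k v = cube_on C \<inter> ({w. inner_on C w w = 1} \<inter> (\<Inter>d\<in>{..<k}. {w. inner_on C w (v d) = 0}))"
    unfolding unit_orth_def by auto
  moreover have "closed ({w. inner_on C w w = 1} \<inter> (\<Inter>d\<in>{..<k}. {w. inner_on C w (v d) = 0}))"
    unfolding inner_on_def by (intro closed_Int closed_INT ballI closed_Collect_eq continuous_intros)
  ultimately show ?thesis using compact_Int_closed[OF compact_cube_on] by simp
qed

lemma in_cube_on:
  assumes "finite C" "\<And>c. c \<notin> C \<Longrightarrow> w c = 0" "inner_on C w w = 1"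
  shows "w \<in> cube_on C"
proof -
  have "(w c)\<^sup>2 \<le> 1" if "c \<in> C" for c
  proof -
    have "(w c)\<^sup>2 = (\<Sum>c'\<in>{c}. w c' * w c')" by (simp add: power2_eq_square)
    also have "\<dots> \<le> inner_on C w w"
      unfolding inner_on_def by (rule sum_mono2) (use assms(1) that in auto)
    finally show ?thesis using assms(3) by simp
  qed
  then show ?thesis
    unfolding cube_on_def using assms(2) by (auto simp: PiE_iff abs_le_iff abs_square_le_1)
qed

lemma cube_on_outside: "w \<in> cube_on C \<Longrightarrow> c \<notin> C \<Longrightarrow> w c = 0"
  unfolding cube_on_def by (auto simp: PiE_iff dest: spec[of _ c])

lemma unit_orth_image_pos_if_image_pos:
  assumes "finite C" "\<forall>d<k. inner_on C w (v d) = 0"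
    and "inner_on R (mat_vec C A w) (mat_vec C A w) > 0"
  shows "\<exists>w'\<in>unit_orth C k v. inner_on R (mat_vec C A w') (mat_vec C A w') > 0"
proof -
  define n where "n = inner_on C w w"
  have "n > 0"
  proof (rule ccontr)
    assume "\<not> n > 0"
    then have "\<forall>c\<in>C. w c = 0"
      using inner_on_self_nonneg[of C w] inner_on_self_eq_0_iff[OF assms(1)] by (simp add: n_def)
    then have "mat_vec C A w = (\<lambda>r. 0)" unfolding mat_vec_def by auto
    then show False using assms(3) by (simp add: inner_on_def)
  qed
  define w' where "w' = (\<lambda>c. if c \<in> C then (1 / sqrt n) * w c else 0)"
  have w'1: "inner_on C w' w' = 1"
    unfolding w'_def inner_on_restrict_left inner_on_restrict_right inner_on_scale_self
    using \<open>n > 0\<close> by (simp add: n_def power_divide)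
  have "w' \<in> cube_on C" by (rule in_cube_on[OF assms(1) _ w'1]) (simp add: w'_def)
  moreover have "inner_on C w' (v d) = 0" if "d < k" for d
    unfolding w'_def inner_on_restrict_left using assms(2) that
    by (simp add: inner_on_def sum_divide_distrib[symmetric])
  moreover have "inner_on R (mat_vec C A w') (mat_vec C A w') > 0"
    unfolding w'_def mat_vec_restrict mat_vec_scale inner_on_scale_self using \<open>n > 0\<close> assms(3) by simp
  ultimately show ?thesis using w'1 unfolding unit_orth_def by blast
qed

text \<open>The normalization of \<open>m + t w\<close> stays in the constraint set, so maximality of \<open>m\<close> kills the
  first-order term \<open>2 t \<langle>A m, A w\<rangle>\<close>.\<close>

lemma unit_orth_maximizer_orthogonal:
  assumes fin: "finite C" and m: "m \<in> unit_orth C k v"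
    and max: "\<And>z. z \<in> unit_orth C k v \<Longrightarrow>
                inner_on R (mat_vec C A z) (mat_vec C A z) \<le> inner_on R (mat_vec C A m) (mat_vec C A m)"
    and wm: "inner_on C w m = 0" and wv: "\<forall>d<k. inner_on C w (v d) = 0"
  shows "inner_on R (mat_vec C A m) (mat_vec C A w) = 0"
proof -
  define F where "F z = inner_on R (mat_vec C A z) (mat_vec C A z)" for z
  have m1: "inner_on C m m = 1" and mv: "\<forall>d<k. inner_on C m (v d) = 0" and mcube: "m \<in> cube_on C"
    using m by (auto simp: unit_orth_def)
  define w' where "w' = (\<lambda>c. if c \<in> C then w c else 0)"
  have w'v: "inner_on C w' (v d) = 0" if "d < k" for d
    using wv that unfolding w'_def inner_on_restrict_left by simp
  have mw': "inner_on C m w' = 0"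
    using wm unfolding w'_def inner_on_restrict_right by (simp add: inner_on_commute)
  define n where "n = inner_on C w' w'"
  have n0: "n \<ge> 0" unfolding n_def by (rule inner_on_self_nonneg)
  define b where "b = inner_on R (mat_vec C A m) (mat_vec C A w')"
  have "2 * t * b \<le> t\<^sup>2 * (F m * n - F w')" for t
  proof -
    define s where "s = 1 + t\<^sup>2 * n"
    have s0: "s > 0" unfolding s_def using n0 by (simp add: add_pos_nonneg)
    define z where "z = (\<lambda>c. (1 / sqrt s) * (1 * m c + t * w' c))"
    have "inner_on C (\<lambda>c. 1 * m c + t * w' c) (\<lambda>c. 1 * m c + t * w' c) = s"
      unfolding inner_on_lincomb_self using m1 mw' by (simp add: s_def n_def)
    then have z1: "inner_on C z z = 1"
      unfolding z_def inner_on_scale_self using s0 by (simp add: power_divide)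
    have "z \<in> cube_on C"
      by (rule in_cube_on[OF fin _ z1]) (simp add: z_def w'_def cube_on_outside[OF mcube])
    moreover have "inner_on C z (v d) = 0" if "d < k" for d
    proof -
      have "inner_on C z (v d) = (1 / sqrt s) * (inner_on C m (v d) + t * inner_on C w' (v d))"
        unfolding z_def inner_on_def by (simp add: algebra_simps sum.distrib sum_distrib_left)
      then show ?thesis using mv w'v that by simp
    qed
    ultimately have "F z \<le> F m" using z1 max unfolding F_def unit_orth_def by blast
    moreover have "F z = (1 / sqrt s)\<^sup>2 * (F m + 2 * t * b + t\<^sup>2 * F w')"
      unfolding F_def z_def mat_vec_scale inner_on_scale_self mat_vec_lincomb inner_on_lincomb_self b_def
      by simp
    ultimately have "F m + 2 * t * b + t\<^sup>2 * F w' \<le> F m * s"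
      using s0 by (simp add: power_divide field_simps)
    then show ?thesis by (simp add: s_def algebra_simps)
  qed
  then have "b = 0" by (rule eq_0_if_linear_le_quadratic)
  then show ?thesis unfolding b_def w'_def mat_vec_restrict .
qed

text \<open>Right singular vectors as produced by the greedy construction; the last clause is the
  first-order condition for \<open>v d\<close> to maximize \<open>\<parallel>A w\<parallel>\<close> among unit vectors orthogonal to its predecessors.\<close>

definition singular_family :: "'r set \<Rightarrow> 'c set \<Rightarrow> ('r \<Rightarrow> 'c \<Rightarrow> real) \<Rightarrow> nat \<Rightarrow> (nat \<Rightarrow> 'c \<Rightarrow> real) \<Rightarrow> bool" where
  "singular_family R C A k v \<longleftrightarrow> orthonormal_on C k v \<and>
     (\<forall>d<k. inner_on R (mat_vec C A (v d)) (mat_vec C A (v d)) > 0) \<and>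
     (\<forall>d<k. \<forall>w. (\<forall>d'\<le>d. inner_on C w (v d') = 0) \<longrightarrow> inner_on R (mat_vec C A (v d)) (mat_vec C A w) = 0)"

lemma singular_family_extend:
  assumes fin: "finite C" and G: "singular_family R C A k v"
    and w: "\<forall>d<k. inner_on C w (v d) = 0" "inner_on R (mat_vec C A w) (mat_vec C A w) > 0"
  shows "\<exists>m. singular_family R C A (Suc k) (v(k := m))"
proof -
  define F where "F z = inner_on R (mat_vec C A z) (mat_vec C A z)" for z
  obtain w' where w': "w' \<in> unit_orth C k v" "F w' > 0"
    using unit_orth_image_pos_if_image_pos[OF fin w] unfolding F_def by blast
  have "continuous_on (unit_orth C k v) F"
    unfolding F_def inner_on_def mat_vec_def by (intro continuous_intros)
  then obtain m where m: "m \<in> unit_orth C k v" and max: "\<And>z. z \<in> unit_orth C k v \<Longrightarrow> F z \<le> F m"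
    using continuous_attains_sup[OF compact_unit_orth] w'(1) by blast
  have Fm: "F m > 0" using max[OF w'(1)] w'(2) by simp
  have m1: "inner_on C m m = 1" and mv: "\<forall>d<k. inner_on C m (v d) = 0"
    using m by (auto simp: unit_orth_def)
  define v' where "v' = v(k := m)"
  have "orthonormal_on C (Suc k) v'"
    unfolding orthonormal_on_def
  proof (intro allI impI)
    fix d d' assume "d < Suc k" "d' < Suc k"
    then consider "d < k" "d' < k" | "d = k" "d' < k" | "d < k" "d' = k" | "d = k" "d' = k"
      by linarith
    then show "inner_on C (v' d) (v' d') = (if d = d' then 1 else 0)"
      by cases (use G mv m1 in \<open>auto simp: v'_def singular_family_def orthonormal_on_def inner_on_commute\<close>)
  qed
  moreover have "inner_on R (mat_vec C A (v' d)) (mat_vec C A w) = 0"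
    if "d < Suc k" and hw: "\<forall>d'\<le>d. inner_on C w (v' d') = 0" for d w
  proof (cases "d = k")
    case True
    have "inner_on C w m = 0" using hw True by (auto simp: v'_def)
    moreover have "inner_on C w (v d') = 0" if "d' < k" for d'
      using hw[rule_format, of d'] True that by (simp add: v'_def)
    ultimately show ?thesis
      using unit_orth_maximizer_orthogonal[OF fin m max[unfolded F_def]] True by (auto simp: v'_def)
  next
    case False
    then show ?thesis using G that by (auto simp: singular_family_def v'_def)
  qed
  ultimately have "singular_family R C A (Suc k) v'"
    using G Fm unfolding singular_family_def by (auto simp: v'_def F_def less_Suc_eq)
  then show ?thesis unfolding v'_def by blast
qed

lemma singular_family_images_orthogonal:
  assumes "singular_family R C A k v" "d < k" "d' < k" "d \<noteq> d'"
  shows "inner_on R (mat_vec C A (v d)) (mat_vec C A (v d')) = 0"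
proof -
  have *: "inner_on R (mat_vec C A (v a)) (mat_vec C A (v b)) = 0" if "a < b" "b < k" for a b
  proof -
    have "\<forall>d''\<le>a. inner_on C (v b) (v d'') = 0"
      using assms(1) that by (auto simp: singular_family_def orthonormal_on_def)
    then show ?thesis using assms(1) that by (simp add: singular_family_def)
  qed
  show ?thesis
    using *[of d d'] *[of d' d] assms by (cases "d < d'") (auto simp: inner_on_commute)
qed

text \<open>Once no unit vector orthogonal to \<open>v 0, \<dots>, v (k - 1)\<close> has a nonzero image, \<open>A\<close> is recovered from
  its values on them: apply \<open>A\<close> to \<open>e\<^sub>c - \<Sum>\<^sub>d v d c \<cdot> v d\<close>.\<close>

lemma mat_eq_sum_if_orthogonal_kernel:
  assumes fin: "finite R" "finite C" and v: "orthonormal_on C k v"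
    and ker: "\<And>w. \<forall>d<k. inner_on C w (v d) = 0 \<Longrightarrow> inner_on R (mat_vec C A w) (mat_vec C A w) = 0"
    and rc: "r \<in> R" "c \<in> C"
  shows "A r c = (\<Sum>d<k. v d c * mat_vec C A (v d) r)"
proof -
  define e where "e = (\<lambda>c'. if c' = c then 1 else 0 :: real)"
  define w where "w = (\<lambda>c'. e c' - (\<Sum>d<k. v d c * v d c'))"
  have "inner_on C w (v d') = 0" if "d' < k" for d'
  proof -
    have "inner_on C w (v d') = inner_on C e (v d') - (\<Sum>d<k. v d c * inner_on C (v d) (v d'))"
      unfolding w_def inner_on_def
      by (simp add: algebra_simps sum_subtractf sum_distrib_left sum.swap[of _ C])
    also have "(\<Sum>d<k. v d c * inner_on C (v d) (v d')) = (\<Sum>d<k. if d = d' then v d' c else 0)"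
      by (rule sum.cong) (use v that in \<open>auto simp: orthonormal_on_def\<close>)
    finally show ?thesis using that unfolding e_def inner_on_indicator_left[OF fin(2) rc(2)] by simp
  qed
  then have "mat_vec C A w r = 0"
    using ker inner_on_self_eq_0_iff[OF fin(1)] rc(1) by blast
  moreover have "mat_vec C A w r = mat_vec C A e r - (\<Sum>d<k. v d c * mat_vec C A (v d) r)"
    unfolding w_def mat_vec_def
    by (simp add: algebra_simps sum_subtractf sum_distrib_left sum.swap[of _ C])
  moreover have "mat_vec C A e r = A r c"
    using inner_on_indicator_left[OF fin(2) rc(2), of "A r"]
    by (simp add: e_def mat_vec_def inner_on_def mult.commute)
  ultimately show ?thesis by simp
qed

lemma svd_of_singular_family:
  assumes fin: "finite R" "finite C" and G: "singular_family R C A k v"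
    and ker: "\<And>w. \<forall>d<k. inner_on C w (v d) = 0 \<Longrightarrow> inner_on R (mat_vec C A w) (mat_vec C A w) = 0"
  defines "\<sigma> \<equiv> \<lambda>d. sqrt (inner_on R (mat_vec C A (v d)) (mat_vec C A (v d)))"
  shows "is_svd R C A k \<sigma> (\<lambda>d r. mat_vec C A (v d) r / \<sigma> d) v"
proof -
  have \<sigma>pos: "\<sigma> d > 0" if "d < k" for d
    using G that by (simp add: singular_family_def \<sigma>_def)
  have "orthonormal_on R k (\<lambda>d r. mat_vec C A (v d) r / \<sigma> d)"
    unfolding orthonormal_on_def
  proof (intro allI impI)
    fix d d' assume d: "d < k" "d' < k"
    have "inner_on R (\<lambda>r. mat_vec C A (v d) r / \<sigma> d) (\<lambda>r. mat_vec C A (v d') r / \<sigma> d')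
        = inner_on R (mat_vec C A (v d)) (mat_vec C A (v d')) / (\<sigma> d * \<sigma> d')"
      unfolding inner_on_def by (simp add: sum_divide_distrib)
    then show "inner_on R (\<lambda>r. mat_vec C A (v d) r / \<sigma> d) (\<lambda>r. mat_vec C A (v d') r / \<sigma> d')
        = (if d = d' then 1 else 0)"
      using singular_family_images_orthogonal[OF G d] \<sigma>pos[OF d(1)] G d(1)
      by (auto simp: \<sigma>_def singular_family_def power2_eq_square[symmetric])
  qed
  moreover have "orthonormal_on C k v" using G by (simp add: singular_family_def)
  moreover have "A r c = (\<Sum>d<k. \<sigma> d * (mat_vec C A (v d) r / \<sigma> d) * v d c)"
    if "r \<in> R" "c \<in> C" for r c
  proof -
    have "A r c = (\<Sum>d<k. v d c * mat_vec C A (v d) r)"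
      by (rule mat_eq_sum_if_orthogonal_kernel[OF fin \<open>orthonormal_on C k v\<close> ker that])
    also have "\<dots> = (\<Sum>d<k. \<sigma> d * (mat_vec C A (v d) r / \<sigma> d) * v d c)"
      by (intro sum.cong refl) (use \<sigma>pos in \<open>force simp: mult.commute\<close>)
    finally show ?thesis .
  qed
  ultimately show ?thesis using \<sigma>pos by (simp add: is_svd_def)
qed

lemma svd_exists:
  assumes fin: "finite R" "finite C"
  shows "\<exists>k \<sigma> u v. is_svd R C A k \<sigma> u v"
proof -
  define S where "S = {k. \<exists>v. singular_family R C A k v}"
  have "S \<subseteq> {..card C}"
    unfolding S_def singular_family_def using orthonormal_on_card_le[OF fin(2)] by auto
  then have "finite S" by (rule finite_subset) simp
  have "0 \<in> S" unfolding S_def singular_family_def orthonormal_on_def by simp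
  define k where "k = Max S"
  have "k \<in> S" unfolding k_def using \<open>finite S\<close> \<open>0 \<in> S\<close> by (intro Max_in) auto
  then obtain v where G: "singular_family R C A k v" unfolding S_def by auto
  have "inner_on R (mat_vec C A w) (mat_vec C A w) = 0" if "\<forall>d<k. inner_on C w (v d) = 0" for w
  proof (rule ccontr)
    assume "inner_on R (mat_vec C A w) (mat_vec C A w) \<noteq> 0"
    then have "inner_on R (mat_vec C A w) (mat_vec C A w) > 0"
      using inner_on_self_nonneg[of R "mat_vec C A w"] by simp
    then have "Suc k \<in> S" using singular_family_extend[OF fin(2) G that] unfolding S_def by blast
    then show False using Max_ge[OF \<open>finite S\<close>] k_def by fastforce
  qed
  then show ?thesis using svd_of_singular_family[OF fin G] by blast
qed

section \<open>Von Neumann's trace inequality and uniqueness of singular values\<close>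

definition antimono_upto :: "nat \<Rightarrow> (nat \<Rightarrow> real) \<Rightarrow> bool" where
  "antimono_upto n f \<longleftrightarrow> (\<forall>i j. i \<le> j \<longrightarrow> j < n \<longrightarrow> f j \<le> f i)"

definition zero_pad :: "nat \<Rightarrow> (nat \<Rightarrow> real) \<Rightarrow> nat \<Rightarrow> real" where
  "zero_pad k f i = (if i < k then f i else 0)"

definition frob_inner :: "'r set \<Rightarrow> 'c set \<Rightarrow> ('r \<Rightarrow> 'c \<Rightarrow> real) \<Rightarrow> ('r \<Rightarrow> 'c \<Rightarrow> real) \<Rightarrow> real" where
  "frob_inner R C A B = (\<Sum>r\<in>R. \<Sum>c\<in>C. A r c * B r c)"

lemma is_svd_permute:
  assumes "is_svd R C A k \<sigma> u v" "p permutes {..<k}"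
  shows "is_svd R C A k (\<sigma> \<circ> p) (\<lambda>d. u (p d)) (\<lambda>d. v (p d))"
    and "mset (map (\<sigma> \<circ> p) [0..<k]) = mset (map \<sigma> [0..<k])"
proof -
  have pk: "p d < k" if "d < k" for d using permutes_in_image[OF assms(2), of d] that by simp
  have pinj: "p d = p d' \<longleftrightarrow> d = d'" for d d' using assms(2) by (metis permutes_inj injD)
  show "is_svd R C A k (\<sigma> \<circ> p) (\<lambda>d. u (p d)) (\<lambda>d. v (p d))"
    unfolding is_svd_def
  proof (intro conjI ballI)
    show "\<forall>d<k. 0 < (\<sigma> \<circ> p) d" using assms(1) pk by (simp add: is_svd_def)
    show "orthonormal_on R k (\<lambda>d. u (p d))" "orthonormal_on C k (\<lambda>d. v (p d))"
      using assms(1) pk pinj by (simp_all add: is_svd_def orthonormal_on_def)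
    fix r c assume "r \<in> R" "c \<in> C"
    then have "A r c = (\<Sum>d<k. \<sigma> d * u d r * v d c)" using assms(1) by (simp add: is_svd_def)
    also have "\<dots> = (\<Sum>d<k. \<sigma> (p d) * u (p d) r * v (p d) c)"
      using sum.permute[OF assms(2), of "\<lambda>d. \<sigma> d * u d r * v d c"] by (simp add: comp_def)
    finally show "A r c = (\<Sum>d<k. (\<sigma> \<circ> p) d * u (p d) r * v (p d) c)" by simp
  qed
  have "map (\<sigma> \<circ> p) [0..<k] = permute_list p (map \<sigma> [0..<k])"
    unfolding permute_list_def by (auto intro: nth_equalityI simp: pk)
  then show "mset (map (\<sigma> \<circ> p) [0..<k]) = mset (map \<sigma> [0..<k])"
    using assms(2) by simp
qed

lemma obtain_antimono_permutation:
  fixes \<sigma> :: "nat \<Rightarrow> real"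
  obtains p where "p permutes {..<k}" "antimono_upto k (\<sigma> \<circ> p)"
proof -
  define xs where "xs = map \<sigma> [0..<k]"
  define ys where "ys = rev (sort xs)"
  have "mset ys = mset xs" by (simp add: ys_def)
  then obtain p where p: "p permutes {..<length xs}" "permute_list p xs = ys"
    using mset_eq_permutation by metis
  have lx: "length xs = k" by (simp add: xs_def)
  have pk: "p d < k" if "d < k" for d using permutes_in_image[OF p(1), of d] that lx by simp
  have ysn: "ys ! i = \<sigma> (p i)" if "i < k" for i
    using p(2)[symmetric] that pk lx by (simp add: permute_list_def xs_def)
  have "antimono_upto k (\<sigma> \<circ> p)"
    unfolding antimono_upto_def
  proof (intro allI impI)
    fix i j assume ij: "i \<le> j" "j < k"
    have ls: "length (sort xs) = k" using lx by simp
    have "sort xs ! (k - Suc j) \<le> sort xs ! (k - Suc i)"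
      by (rule sorted_nth_mono) (use ij ls in auto)
    then have "ys ! j \<le> ys ! i" unfolding ys_def using ij ls by (simp add: rev_nth)
    then show "(\<sigma> \<circ> p) j \<le> (\<sigma> \<circ> p) i" using ysn ij by simp
  qed
  then show ?thesis using that p(1) lx by simp
qed

lemma is_svd_sorted:
  assumes "is_svd R C A k \<sigma> u v"
  obtains \<sigma>' u' v' where "is_svd R C A k \<sigma>' u' v'" "antimono_upto k \<sigma>'"
    "mset (map \<sigma>' [0..<k]) = mset (map \<sigma> [0..<k])"
proof -
  obtain p where "p permutes {..<k}" "antimono_upto k (\<sigma> \<circ> p)" by (rule obtain_antimono_permutation)
  then show ?thesis using is_svd_permute[OF assms] that by blast
qed

lemma sorted_svd_exists:
  assumes "finite R" "finite C"
  obtains k \<sigma> u v where "is_svd R C A k \<sigma> u v" "antimono_upto k \<sigma>"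
  using svd_exists[OF assms, of A] is_svd_sorted by metis

lemma sum_swap_pairs:
  "(\<Sum>r\<in>R. \<Sum>c\<in>C. \<Sum>i\<in>I. \<Sum>j\<in>J. f r c i j) = (\<Sum>i\<in>I. \<Sum>j\<in>J. \<Sum>r\<in>R. \<Sum>c\<in>C. f r c i j)"
proof -
  have "(\<Sum>r\<in>R. \<Sum>c\<in>C. \<Sum>i\<in>I. \<Sum>j\<in>J. f r c i j) = (\<Sum>r\<in>R. \<Sum>i\<in>I. \<Sum>c\<in>C. \<Sum>j\<in>J. f r c i j)"
    by (rule sum.cong[OF refl], rule sum.swap)
  also have "\<dots> = (\<Sum>i\<in>I. \<Sum>r\<in>R. \<Sum>j\<in>J. \<Sum>c\<in>C. f r c i j)"
    by (subst sum.swap) (intro sum.cong refl sum.swap)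
  also have "\<dots> = (\<Sum>i\<in>I. \<Sum>j\<in>J. \<Sum>r\<in>R. \<Sum>c\<in>C. f r c i j)"
    by (intro sum.cong refl, rule sum.swap)
  finally show ?thesis .
qed

lemma frob_inner_svd:
  assumes A: "is_svd R C A k \<sigma> u v" and B: "is_svd R C B l \<tau> x y"
  shows "frob_inner R C A B
           = (\<Sum>i<k. \<Sum>j<l. \<sigma> i * \<tau> j * (inner_on R (u i) (x j) * inner_on C (v i) (y j)))"
proof -
  have "frob_inner R C A B
      = (\<Sum>r\<in>R. \<Sum>c\<in>C. \<Sum>i<k. \<Sum>j<l. \<sigma> i * \<tau> j * ((u i r * x j r) * (v i c * y j c)))"
    unfolding frob_inner_def using A B by (simp add: is_svd_def sum_product mult_ac)
  also have "\<dots> = (\<Sum>i<k. \<Sum>j<l. \<Sum>r\<in>R. \<Sum>c\<in>C. \<sigma> i * \<tau> j * ((u i r * x j r) * (v i c * y j c)))"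
    by (rule sum_swap_pairs)
  also have "\<dots> = (\<Sum>i<k. \<Sum>j<l. \<sigma> i * \<tau> j * (\<Sum>r\<in>R. \<Sum>c\<in>C. (u i r * x j r) * (v i c * y j c)))"
    by (simp add: sum_distrib_left)
  also have "\<dots> = (\<Sum>i<k. \<Sum>j<l. \<sigma> i * \<tau> j * (inner_on R (u i) (x j) * inner_on C (v i) (y j)))"
    by (simp add: inner_on_def sum_product)
  finally show ?thesis .
qed

lemma frob_inner_self_svd:
  assumes A: "is_svd R C A k \<sigma> u v"
  shows "frob_inner R C A A = (\<Sum>i<k. (\<sigma> i)\<^sup>2)"
proof -
  have "frob_inner R C A A = (\<Sum>i<k. \<Sum>j<k. if i = j then (\<sigma> i)\<^sup>2 else 0)"
    unfolding frob_inner_svd[OF A A]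
    by (intro sum.cong refl) (use A in \<open>auto simp: is_svd_def orthonormal_on_def power2_eq_square\<close>)
  then show ?thesis by simp
qed

lemma frob_inner_nonneg: "frob_inner R C A A \<ge> 0"
  unfolding frob_inner_def by (intro sum_nonneg) simp

lemma frob_inner_diff_self:
  "frob_inner R C (\<lambda>r c. A r c - B r c) (\<lambda>r c. A r c - B r c)
     = frob_inner R C A A - 2 * frob_inner R C A B + frob_inner R C B B"
  unfolding frob_inner_def
  by (simp add: algebra_simps power2_eq_square sum.distrib sum_subtractf sum_distrib_left)

lemma frob_inner_divide:
  "frob_inner R C (\<lambda>r c. A r c / a) (\<lambda>r c. B r c / b) = frob_inner R C A B / (a * b)"
  unfolding frob_inner_def by (simp add: sum_divide_distrib)

lemma frob_inner_Cauchy_Schwarz: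
  "frob_inner R C A B \<le> sqrt (frob_inner R C A A) * sqrt (frob_inner R C B B)"
proof -
  have "frob_inner R C A B \<le> (\<Sum>z\<in>R \<times> C. \<bar>A (fst z) (snd z)\<bar> * \<bar>B (fst z) (snd z)\<bar>)"
    unfolding frob_inner_def sum.cartesian_product case_prod_beta
    by (intro sum_mono) (simp add: abs_mult[symmetric])
  also have "\<dots> \<le> L2_set (\<lambda>z. A (fst z) (snd z)) (R \<times> C) * L2_set (\<lambda>z. B (fst z) (snd z)) (R \<times> C)"
    by (rule L2_set_mult_ineq)
  also have "\<dots> = sqrt (frob_inner R C A A) * sqrt (frob_inner R C B B)"
    unfolding L2_set_def frob_inner_def
    by (simp add: sum.cartesian_product case_prod_beta power2_eq_square)
  finally show ?thesis .
qed

lemma sum_of_bool_le_upto: "k < n \<Longrightarrow> (\<Sum>i<n. of_bool (i \<le> k) :: real) = real k + 1"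
proof -
  assume "k < n"
  then have "{..<n} \<inter> {i. i \<le> k} = {..k}" by auto
  then show ?thesis by simp
qed

lemma telescope_upto:
  fixes a :: "nat \<Rightarrow> real"
  assumes "i < n"
  shows "(\<Sum>k<n. (a k - (if Suc k < n then a (Suc k) else 0)) * of_bool (i \<le> k)) = a i"
proof -
  define a' where "a' k = (if k < n then a k else 0)" for k
  have "{..<n} \<inter> {k. i \<le> k} = {i..<n}" by auto
  then have "(\<Sum>k<n. (a k - (if Suc k < n then a (Suc k) else 0)) * of_bool (i \<le> k))
      = (\<Sum>k\<in>{i..<n}. a' k - a' (Suc k))"
    by (simp add: a'_def)
  also have "\<dots> = a' i - a' n"
    using sum_Suc_diff'[of i n "\<lambda>k. - a' k"] assms by simp
  finally show ?thesis using assms by (simp add: a'_def)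
qed

text \<open>Abel summation: writing nonincreasing sequences as sums of nonnegative step functions
  \<open>of_bool (i \<le> k)\<close> reduces bilinear forms to sums over upper-left corners of \<open>W\<close>.\<close>

lemma bilinear_form_telescope:
  fixes a b \<alpha> \<beta> :: "nat \<Rightarrow> real"
  assumes a: "\<And>i. i < n \<Longrightarrow> a i = (\<Sum>k<n. \<alpha> k * of_bool (i \<le> k))"
    and b: "\<And>j. j < n \<Longrightarrow> b j = (\<Sum>l<n. \<beta> l * of_bool (j \<le> l))"
  shows "(\<Sum>i<n. \<Sum>j<n. a i * b j * W i j)
           = (\<Sum>k<n. \<Sum>l<n. \<alpha> k * \<beta> l * (\<Sum>i<n. \<Sum>j<n. of_bool (i \<le> k) * of_bool (j \<le> l) * W i j))"
proof -
  have "(\<Sum>i<n. \<Sum>j<n. a i * b j * W i j)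
      = (\<Sum>i<n. \<Sum>j<n. (\<Sum>k<n. \<alpha> k * of_bool (i \<le> k)) * (\<Sum>l<n. \<beta> l * of_bool (j \<le> l)) * W i j)"
    by (intro sum.cong refl) (simp add: a b)
  also have "\<dots> = (\<Sum>i<n. \<Sum>j<n. \<Sum>k<n. \<Sum>l<n. (\<alpha> k * of_bool (i \<le> k)) * (\<beta> l * of_bool (j \<le> l)) * W i j)"
    by (simp only: sum_product, simp only: sum_distrib_right)
  also have "\<dots> = (\<Sum>i<n. \<Sum>j<n. \<Sum>k<n. \<Sum>l<n. \<alpha> k * \<beta> l * (of_bool (i \<le> k) * of_bool (j \<le> l) * W i j))"
    by (simp only: mult_ac)
  also have "\<dots> = (\<Sum>k<n. \<Sum>l<n. \<Sum>i<n. \<Sum>j<n. \<alpha> k * \<beta> l * (of_bool (i \<le> k) * of_bool (j \<le> l) * W i j))"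
    by (rule sum_swap_pairs)
  finally show ?thesis by (simp only: sum_distrib_left)
qed

lemma doubly_substochastic_corner_le:
  fixes W :: "nat \<Rightarrow> nat \<Rightarrow> real"
  assumes W0: "\<And>i j. W i j \<ge> 0"
    and rows: "\<And>i. i < n \<Longrightarrow> (\<Sum>j<n. W i j) \<le> 1" and cols: "\<And>j. j < n \<Longrightarrow> (\<Sum>i<n. W i j) \<le> 1"
    and kl: "k < n" "l < n"
  shows "(\<Sum>i<n. \<Sum>j<n. of_bool (i \<le> k) * of_bool (j \<le> l) * W i j) \<le> real (min k l) + 1"
proof -
  have "(\<Sum>i<n. \<Sum>j<n. of_bool (i \<le> k) * of_bool (j \<le> l) * W i j) \<le> (\<Sum>i<n. of_bool (i \<le> k) * (\<Sum>j<n. W i j))"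
    unfolding sum_distrib_left by (intro sum_mono) (simp add: W0)
  also have "\<dots> \<le> (\<Sum>i<n. of_bool (i \<le> k))"
    by (intro sum_mono) (simp add: rows)
  finally have 1: "(\<Sum>i<n. \<Sum>j<n. of_bool (i \<le> k) * of_bool (j \<le> l) * W i j) \<le> real k + 1"
    using sum_of_bool_le_upto[OF kl(1)] by simp
  have "(\<Sum>i<n. \<Sum>j<n. of_bool (i \<le> k) * of_bool (j \<le> l) * W i j)
      = (\<Sum>j<n. \<Sum>i<n. of_bool (i \<le> k) * of_bool (j \<le> l) * W i j)"
    by (rule sum.swap)
  also have "\<dots> \<le> (\<Sum>j<n. of_bool (j \<le> l) * (\<Sum>i<n. W i j))"
    unfolding sum_distrib_left by (intro sum_mono) (simp add: W0)
  also have "\<dots> \<le> (\<Sum>j<n. of_bool (j \<le> l))"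
    by (intro sum_mono) (simp add: cols)
  finally have 2: "(\<Sum>i<n. \<Sum>j<n. of_bool (i \<le> k) * of_bool (j \<le> l) * W i j) \<le> real l + 1"
    using sum_of_bool_le_upto[OF kl(2)] by simp
  show ?thesis using 1 2 by (simp add: min_def)
qed

lemma rearrangement_doubly_substochastic:
  fixes a b :: "nat \<Rightarrow> real" and W :: "nat \<Rightarrow> nat \<Rightarrow> real"
  assumes a: "antimono_upto n a" "\<And>i. i < n \<Longrightarrow> a i \<ge> 0"
    and b: "antimono_upto n b" "\<And>i. i < n \<Longrightarrow> b i \<ge> 0"
    and W0: "\<And>i j. W i j \<ge> 0"
    and rows: "\<And>i. i < n \<Longrightarrow> (\<Sum>j<n. W i j) \<le> 1" and cols: "\<And>j. j < n \<Longrightarrow> (\<Sum>i<n. W i j) \<le> 1"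
  shows "(\<Sum>i<n. \<Sum>j<n. a i * b j * W i j) \<le> (\<Sum>i<n. a i * b i)"
proof -
  define \<alpha> where "\<alpha> k = a k - (if Suc k < n then a (Suc k) else 0)" for k
  define \<beta> where "\<beta> k = b k - (if Suc k < n then b (Suc k) else 0)" for k
  have \<alpha>0: "\<alpha> k \<ge> 0" and \<beta>0: "\<beta> k \<ge> 0" if "k < n" for k
    using a b that unfolding \<alpha>_def \<beta>_def antimono_upto_def by auto
  have ha: "a i = (\<Sum>k<n. \<alpha> k * of_bool (i \<le> k))" and hb: "b i = (\<Sum>k<n. \<beta> k * of_bool (i \<le> k))"
    if "i < n" for i
    unfolding \<alpha>_def \<beta>_def using telescope_upto[OF that] by simp_all
  have diag: "(\<Sum>i<n. a i * b i) = (\<Sum>i<n. \<Sum>j<n. a i * b j * of_bool (i = j))"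
    by (intro sum.cong refl, subst sum_mult_of_bool_eq) auto
  have corner: "(\<Sum>i<n. \<Sum>j<n. of_bool (i \<le> k) * of_bool (j \<le> l) * W i j)
      \<le> (\<Sum>i<n. \<Sum>j<n. of_bool (i \<le> k) * of_bool (j \<le> l) * of_bool (i = j))"
    if "k < n" "l < n" for k l
  proof -
    have "(\<Sum>i<n. \<Sum>j<n. of_bool (i \<le> k) * of_bool (j \<le> l) * of_bool (i = j))
        = (\<Sum>i<n. of_bool (i \<le> min k l) :: real)"
      by (intro sum.cong refl, subst sum_mult_of_bool_eq) auto
    also have "\<dots> = real (min k l) + 1"
      using that by (intro sum_of_bool_le_upto) simp
    finally show ?thesis using doubly_substochastic_corner_le[OF W0 rows cols that] by simp
  qed
  have "(\<Sum>i<n. \<Sum>j<n. a i * b j * W i j)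
      = (\<Sum>k<n. \<Sum>l<n. \<alpha> k * \<beta> l * (\<Sum>i<n. \<Sum>j<n. of_bool (i \<le> k) * of_bool (j \<le> l) * W i j))"
    by (rule bilinear_form_telescope[OF ha hb])
  also have "\<dots> \<le> (\<Sum>k<n. \<Sum>l<n. \<alpha> k * \<beta> l *
                    (\<Sum>i<n. \<Sum>j<n. of_bool (i \<le> k) * of_bool (j \<le> l) * of_bool (i = j)))"
    by (rule sum_mono, rule sum_mono, rule mult_left_mono, rule corner) (auto intro: mult_nonneg_nonneg \<alpha>0 \<beta>0)
  also have "\<dots> = (\<Sum>i<n. \<Sum>j<n. a i * b j * of_bool (i = j))"
    by (rule bilinear_form_telescope[OF ha hb, symmetric])
  finally show ?thesis unfolding diag .
qed

lemma sum_abs_inner_products_le_1: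
  assumes x: "orthonormal_on R l x" and y: "orthonormal_on C l y"
    and a: "inner_on R a a = 1" and b: "inner_on C b b = 1"
  shows "(\<Sum>j<l. \<bar>inner_on R a (x j)\<bar> * \<bar>inner_on C b (y j)\<bar>) \<le> 1"
proof -
  have "(\<Sum>j<l. \<bar>inner_on R a (x j)\<bar> * \<bar>inner_on C b (y j)\<bar>)
      \<le> (\<Sum>j<l. ((inner_on R a (x j))\<^sup>2 + (inner_on C b (y j))\<^sup>2) / 2)"
  proof (intro sum_mono)
    fix j
    have "0 \<le> (\<bar>inner_on R a (x j)\<bar> - \<bar>inner_on C b (y j)\<bar>)\<^sup>2" by simp
    then show "\<bar>inner_on R a (x j)\<bar> * \<bar>inner_on C b (y j)\<bar> \<le> ((inner_on R a (x j))\<^sup>2 + (inner_on C b (y j))\<^sup>2) / 2"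
      by (simp add: power2_eq_square algebra_simps)
  qed
  also have "\<dots> \<le> (inner_on R a a + inner_on C b b) / 2"
    using bessel_inequality[OF x, of a] bessel_inequality[OF y, of b]
    by (simp add: sum.distrib sum_divide_distrib[symmetric])
  finally show ?thesis using a b by simp
qed

definition svd_overlap :: "'r set \<Rightarrow> 'c set \<Rightarrow> nat \<Rightarrow> (nat \<Rightarrow> 'r \<Rightarrow> real) \<Rightarrow> (nat \<Rightarrow> 'c \<Rightarrow> real)
    \<Rightarrow> nat \<Rightarrow> (nat \<Rightarrow> 'r \<Rightarrow> real) \<Rightarrow> (nat \<Rightarrow> 'c \<Rightarrow> real) \<Rightarrow> nat \<Rightarrow> nat \<Rightarrow> real" where
  "svd_overlap R C k u v l x y i j =
     (if i < k \<and> j < l then \<bar>inner_on R (u i) (x j)\<bar> * \<bar>inner_on C (v i) (y j)\<bar> else 0)"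

lemma svd_overlap_swap: "svd_overlap R C k u v l x y i j = svd_overlap R C l x y k u v j i"
  by (auto simp: svd_overlap_def inner_on_commute)

lemma svd_overlap_row_sum_le_1:
  assumes "orthonormal_on R k u" "orthonormal_on C k v" "orthonormal_on R l x" "orthonormal_on C l y"
    and "l \<le> n"
  shows "(\<Sum>j<n. svd_overlap R C k u v l x y i j) \<le> 1"
proof (cases "i < k")
  case True
  have "(\<Sum>j<n. svd_overlap R C k u v l x y i j) = (\<Sum>j<l. svd_overlap R C k u v l x y i j)"
    by (rule sum.mono_neutral_right) (use assms(5) in \<open>auto simp: svd_overlap_def\<close>)
  also have "\<dots> \<le> 1"
    using assms True by (simp add: svd_overlap_def sum_abs_inner_products_le_1 orthonormal_on_def)
  finally show ?thesis .
qed (simp add: svd_overlap_def)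

lemma von_neumann_trace_inequality:
  assumes A: "is_svd R C A k \<sigma> u v" "antimono_upto k \<sigma>"
    and B: "is_svd R C B l \<tau> x y" "antimono_upto l \<tau>"
    and n: "k \<le> n" "l \<le> n"
  shows "frob_inner R C A B \<le> (\<Sum>i<n. zero_pad k \<sigma> i * zero_pad l \<tau> i)"
proof -
  let ?W = "svd_overlap R C k u v l x y"
  have \<sigma>0: "\<forall>i<k. \<sigma> i > 0" and \<tau>0: "\<forall>i<l. \<tau> i > 0" using A(1) B(1) by (auto simp: is_svd_def)
  have "frob_inner R C A B \<le> (\<Sum>i<k. \<Sum>j<l. \<sigma> i * \<tau> j * ?W i j)"
    unfolding frob_inner_svd[OF A(1) B(1)] svd_overlap_def
    by (intro sum_mono mult_left_mono) (auto simp: \<sigma>0 \<tau>0 less_imp_le abs_mult[symmetric])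
  also have "\<dots> = (\<Sum>i<k. \<Sum>j<l. zero_pad k \<sigma> i * zero_pad l \<tau> j * ?W i j)"
    by (simp add: zero_pad_def)
  also have "\<dots> = (\<Sum>i<n. \<Sum>j<n. zero_pad k \<sigma> i * zero_pad l \<tau> j * ?W i j)"
    using n by (intro sum.mono_neutral_left sum.mono_neutral_cong_left) (auto simp: zero_pad_def)
  also have "\<dots> \<le> (\<Sum>i<n. zero_pad k \<sigma> i * zero_pad l \<tau> i)"
  proof (rule rearrangement_doubly_substochastic)
    show "antimono_upto n (zero_pad k \<sigma>)" "antimono_upto n (zero_pad l \<tau>)"
      using A(2) B(2) \<sigma>0 \<tau>0 unfolding antimono_upto_def zero_pad_def by (auto simp: less_imp_le)
    show "0 \<le> zero_pad k \<sigma> i" "0 \<le> zero_pad l \<tau> i" "0 \<le> ?W i j" for i j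
      using \<sigma>0 \<tau>0 by (auto simp: zero_pad_def svd_overlap_def less_imp_le)
    show "(\<Sum>j<n. ?W i j) \<le> 1" for i
      using A(1) B(1) n(2) by (intro svd_overlap_row_sum_le_1) (auto simp: is_svd_def)
    show "(\<Sum>i<n. ?W i j) \<le> 1" for j
      unfolding svd_overlap_swap[of R C k u v]
      using A(1) B(1) n(1) by (intro svd_overlap_row_sum_le_1) (auto simp: is_svd_def)
  qed
  finally show ?thesis .
qed

lemma frob_inner_self_zero_pad:
  assumes "is_svd R C A k \<sigma> u v" "k \<le> n"
  shows "frob_inner R C A A = (\<Sum>i<n. (zero_pad k \<sigma> i)\<^sup>2)"
proof -
  have "(\<Sum>i<n. (zero_pad k \<sigma> i)\<^sup>2) = (\<Sum>i<k. (zero_pad k \<sigma> i)\<^sup>2)"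
    using assms(2) by (intro sum.mono_neutral_right) (auto simp: zero_pad_def)
  then show ?thesis using frob_inner_self_svd[OF assms(1)] by (simp add: zero_pad_def)
qed

lemma Mirsky_inequality:
  assumes A: "is_svd R C A k \<sigma> u v" "antimono_upto k \<sigma>"
    and B: "is_svd R C B l \<tau> x y" "antimono_upto l \<tau>"
    and n: "k \<le> n" "l \<le> n"
  shows "(\<Sum>i<n. (zero_pad k \<sigma> i - zero_pad l \<tau> i)\<^sup>2)
           \<le> frob_inner R C (\<lambda>r c. A r c - B r c) (\<lambda>r c. A r c - B r c)"
proof -
  have "(\<Sum>i<n. (zero_pad k \<sigma> i - zero_pad l \<tau> i)\<^sup>2)
      = (\<Sum>i<n. (zero_pad k \<sigma> i)\<^sup>2) - 2 * (\<Sum>i<n. zero_pad k \<sigma> i * zero_pad l \<tau> i)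
          + (\<Sum>i<n. (zero_pad l \<tau> i)\<^sup>2)"
    by (simp add: power2_diff sum.distrib sum_subtractf sum_distrib_left mult.assoc)
  also have "\<dots> \<le> frob_inner R C A A - 2 * frob_inner R C A B + frob_inner R C B B"
    using von_neumann_trace_inequality[OF A B n]
      frob_inner_self_zero_pad[OF A(1) n(1)] frob_inner_self_zero_pad[OF B(1) n(2)] by simp
  finally show ?thesis by (simp add: frob_inner_diff_self)
qed

lemma svd_singular_values_unique:
  assumes A1: "is_svd R C A k \<sigma> u v" and A2: "is_svd R C A l \<tau> x y"
  shows "mset (map \<sigma> [0..<k]) = mset (map \<tau> [0..<l])"
proof -
  obtain \<sigma>' u' v' where s1: "is_svd R C A k \<sigma>' u' v'" "antimono_upto k \<sigma>'"
    "mset (map \<sigma>' [0..<k]) = mset (map \<sigma> [0..<k])"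
    using is_svd_sorted[OF A1] by blast
  obtain \<tau>' x' y' where s2: "is_svd R C A l \<tau>' x' y'" "antimono_upto l \<tau>'"
    "mset (map \<tau>' [0..<l]) = mset (map \<tau> [0..<l])"
    using is_svd_sorted[OF A2] by blast
  define n where "n = max k l"
  have "(\<Sum>i<n. (zero_pad k \<sigma>' i - zero_pad l \<tau>' i)\<^sup>2) \<le> 0"
    using Mirsky_inequality[OF s1(1,2) s2(1,2), of n] by (simp add: n_def frob_inner_def)
  then have eq: "zero_pad k \<sigma>' i = zero_pad l \<tau>' i" if "i < n" for i
    using that sum_nonneg_eq_0_iff[of "{..<n}" "\<lambda>i. (zero_pad k \<sigma>' i - zero_pad l \<tau>' i)\<^sup>2"]
    by (simp add: order_antisym sum_nonneg)
  have "k = l"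
  proof (rule ccontr)
    assume "k \<noteq> l"
    then consider "k < l" | "l < k" by linarith
    then show False
    proof cases
      case 1
      then have "zero_pad k \<sigma>' k = zero_pad l \<tau>' k" using eq by (simp add: n_def)
      then show False using 1 s2(1) by (force simp: zero_pad_def is_svd_def)
    next
      case 2
      then have "zero_pad k \<sigma>' l = zero_pad l \<tau>' l" using eq by (simp add: n_def)
      then show False using 2 s1(1) by (force simp: zero_pad_def is_svd_def)
    qed
  qed
  then have "map \<sigma>' [0..<k] = map \<tau>' [0..<l]"
    using eq by (auto simp: n_def zero_pad_def)
  then show ?thesis using s1(3) s2(3) by simp
qed

section \<open>Entanglement as entropy of the normalized squared singular values\<close>

definition entropy :: "nat \<Rightarrow> (nat \<Rightarrow> real) \<Rightarrow> real" where
  "entropy K p = - (\<Sum>i<K. if p i = 0 then 0 else p i * ln (p i))"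

definition prob_vector :: "nat \<Rightarrow> (nat \<Rightarrow> real) \<Rightarrow> bool" where
  "prob_vector K p \<longleftrightarrow> (\<forall>i. p i \<ge> 0) \<and> (\<Sum>i<K. p i) = 1"

lemma sum_mset_map_upt: "(\<Sum>s\<in>#mset (map \<sigma> [0..<k]). f s) = (\<Sum>i<k. f (\<sigma> i))"
proof -
  have "(\<Sum>s\<in>#mset (map \<sigma> [0..<k]). f s) = sum_list (map f (map \<sigma> [0..<k]))"
    by (metis mset_map sum_mset_sum_list)
  also have "\<dots> = sum_list (map (f \<circ> \<sigma>) [0..<k])" by simp
  also have "\<dots> = (\<Sum>i<k. f (\<sigma> i))" by (simp add: interv_sum_list_conv_sum_set_nat atLeast0LessThan)
  finally show ?thesis .
qed

lemma singular_values_eq: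
  assumes "is_svd R C A k \<sigma> u v"
  shows "singular_values R C A = mset (map \<sigma> [0..<k]) + replicate_mset (min (card R) (card C) - k) 0"
proof -
  have "(THE S. svd_pos R C A S) = mset (map \<sigma> [0..<k])"
  proof (rule the_equality)
    show "svd_pos R C A (mset (map \<sigma> [0..<k]))" using assms svd_pos_iff by blast
  next
    fix S assume "svd_pos R C A S"
    then show "S = mset (map \<sigma> [0..<k])"
      unfolding svd_pos_iff using svd_singular_values_unique[OF assms] by metis
  qed
  then show ?thesis unfolding singular_values_def by (simp add: Let_def)
qed

lemma sum_mset_singular_values:
  fixes f :: "real \<Rightarrow> real"
  assumes "is_svd R C A k \<sigma> u v"
  shows "(\<Sum>s\<in>#singular_values R C A. f s) = (\<Sum>i<k. f (\<sigma> i)) + real (min (card R) (card C) - k) * f 0"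
  unfolding singular_values_eq[OF assms]
  by (simp only: image_mset_union sum_mset.union sum_mset_map_upt) simp

lemma svd_length_le:
  assumes "finite R" "finite C" "is_svd R C A k \<sigma> u v"
  shows "k \<le> min (card R) (card C)"
  using orthonormal_on_card_le[OF assms(1)] orthonormal_on_card_le[OF assms(2)] assms(3)
  by (auto simp: is_svd_def)

lemma QE_mat_eq_0:
  assumes "finite R" "finite C" "frob_inner R C A A = 0"
  shows "QE_mat R C A = 0"
proof -
  obtain k \<sigma> u v where s: "is_svd R C A k \<sigma> u v" using svd_exists[OF assms(1,2)] by blast
  have "(\<Sum>s\<in>#singular_values R C A. s\<^sup>2) = frob_inner R C A A"
    unfolding sum_mset_singular_values[OF s] frob_inner_self_svd[OF s] by simp
  then show ?thesis using assms(3) by (simp add: QE_mat_def Let_def)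
qed

lemma QE_mat_eq_entropy:
  assumes fin: "finite R" "finite C" and A: "is_svd R C A k \<sigma> u v" and t: "frob_inner R C A A > 0"
  shows "QE_mat R C A = entropy (min (card R) (card C)) (\<lambda>i. (zero_pad k \<sigma> i)\<^sup>2 / frob_inner R C A A)"
proof -
  define K where "K = min (card R) (card C)"
  define t where "t = frob_inner R C A A"
  have kK: "k \<le> K" unfolding K_def by (rule svd_length_le[OF fin A])
  have t_eq: "(\<Sum>s\<in>#singular_values R C A. s\<^sup>2) = t"
    unfolding sum_mset_singular_values[OF A] t_def frob_inner_self_svd[OF A] by simp
  define g where "g x = (if x = 0 then 0 else x\<^sup>2 / t * ln (x\<^sup>2 / t))" for x :: real
  define h where "h x = (if x\<^sup>2 / t = 0 then 0 else x\<^sup>2 / t * ln (x\<^sup>2 / t))" for x :: real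
  have "(\<Sum>s\<in>#singular_values R C A. g s) = (\<Sum>i<k. g (\<sigma> i))"
    unfolding sum_mset_singular_values[OF A] by (simp add: g_def)
  also have "\<dots> = (\<Sum>i<k. h (\<sigma> i))"
    using A t by (intro sum.cong refl) (auto simp: g_def h_def t_def is_svd_def)
  also have "\<dots> = (\<Sum>i<K. h (zero_pad k \<sigma> i))"
    using kK by (intro sum.mono_neutral_cong_left) (auto simp: h_def zero_pad_def)
  finally show ?thesis
    using t unfolding QE_mat_def entropy_def Let_def t_eq K_def[symmetric] t_def[symmetric]
    by (simp add: g_def h_def)
qed

lemma prob_vector_svd:
  assumes fin: "finite R" "finite C" and A: "is_svd R C A k \<sigma> u v" and t: "frob_inner R C A A > 0"
  shows "prob_vector (min (card R) (card C)) (\<lambda>i. (zero_pad k \<sigma> i)\<^sup>2 / frob_inner R C A A)"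
proof -
  have "(\<Sum>i<min (card R) (card C). (zero_pad k \<sigma> i)\<^sup>2) = frob_inner R C A A"
    using frob_inner_self_zero_pad[OF A svd_length_le[OF fin A]] by simp
  then show ?thesis
    unfolding prob_vector_def using t by (simp add: sum_divide_distrib[symmetric])
qed

lemma zero_pad_divide: "zero_pad k (\<lambda>i. \<sigma> i / a) i = zero_pad k \<sigma> i / a"
  by (simp add: zero_pad_def)

lemma sum_abs_diff_squares_le:
  fixes a b :: "nat \<Rightarrow> real"
  assumes a: "(\<Sum>i<K. (a i)\<^sup>2) = 1" and b: "(\<Sum>i<K. (b i)\<^sup>2) = 1"
  shows "(\<Sum>i<K. \<bar>(a i)\<^sup>2 - (b i)\<^sup>2\<bar>) \<le> 2 * sqrt (\<Sum>i<K. (a i - b i)\<^sup>2)"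
proof -
  have "(\<Sum>i<K. (a i + b i)\<^sup>2) \<le> (\<Sum>i<K. 2 * (a i)\<^sup>2 + 2 * (b i)\<^sup>2)"
  proof (intro sum_mono)
    fix i
    have "0 \<le> (a i - b i)\<^sup>2" by simp
    then show "(a i + b i)\<^sup>2 \<le> 2 * (a i)\<^sup>2 + 2 * (b i)\<^sup>2" by (simp add: power2_eq_square algebra_simps)
  qed
  also have "\<dots> = 4" using a b by (simp add: sum.distrib sum_distrib_left[symmetric])
  finally have "sqrt (\<Sum>i<K. (a i + b i)\<^sup>2) \<le> 2"
    using real_sqrt_le_mono[of _ 4] by simp
  have "(\<Sum>i<K. \<bar>(a i)\<^sup>2 - (b i)\<^sup>2\<bar>) = (\<Sum>i<K. \<bar>a i - b i\<bar> * \<bar>a i + b i\<bar>)"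
    by (simp add: power2_eq_square algebra_simps abs_mult[symmetric])
  also have "\<dots> \<le> L2_set (\<lambda>i. a i - b i) {..<K} * L2_set (\<lambda>i. a i + b i) {..<K}"
    by (rule L2_set_mult_ineq)
  also have "\<dots> \<le> sqrt (\<Sum>i<K. (a i - b i)\<^sup>2) * 2"
    using \<open>sqrt (\<Sum>i<K. (a i + b i)\<^sup>2) \<le> 2\<close> unfolding L2_set_def
    by (intro mult_left_mono) (auto simp: sum_nonneg)
  finally show ?thesis by simp
qed

lemma QE_mat_entropy_l1_close:
  assumes fin: "finite R" "finite C" and tA: "frob_inner R C A A > 0" and tB: "frob_inner R C B B > 0"
  defines "\<alpha> \<equiv> sqrt (frob_inner R C A A)" and "\<beta> \<equiv> sqrt (frob_inner R C B B)"
    and "K \<equiv> min (card R) (card C)"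
  obtains p q where "QE_mat R C A = entropy K p" "QE_mat R C B = entropy K q"
    "prob_vector K p" "prob_vector K q"
    "(\<Sum>i<K. \<bar>p i - q i\<bar>)
       \<le> 2 * sqrt (frob_inner R C (\<lambda>r c. A r c / \<alpha> - B r c / \<beta>) (\<lambda>r c. A r c / \<alpha> - B r c / \<beta>))"
proof -
  have \<alpha>0: "\<alpha> > 0" and \<beta>0: "\<beta> > 0" using tA tB by (simp_all add: \<alpha>_def \<beta>_def)
  obtain k \<sigma> u v where A: "is_svd R C A k \<sigma> u v" "antimono_upto k \<sigma>"
    using sorted_svd_exists[OF fin] by blast
  obtain l \<tau> x y where B: "is_svd R C B l \<tau> x y" "antimono_upto l \<tau>"
    using sorted_svd_exists[OF fin] by blast
  have kK: "k \<le> K" and lK: "l \<le> K" unfolding K_def using svd_length_le[OF fin A(1)] svd_length_le[OF fin B(1)] by auto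
  define a where "a i = zero_pad k \<sigma> i / \<alpha>" for i
  define b where "b i = zero_pad l \<tau> i / \<beta>" for i
  have A': "is_svd R C (\<lambda>r c. A r c / \<alpha>) k (\<lambda>i. \<sigma> i / \<alpha>) u v" "antimono_upto k (\<lambda>i. \<sigma> i / \<alpha>)"
    using A \<alpha>0 by (auto simp: is_svd_def antimono_upto_def sum_divide_distrib divide_right_mono)
  have B': "is_svd R C (\<lambda>r c. B r c / \<beta>) l (\<lambda>i. \<tau> i / \<beta>) x y" "antimono_upto l (\<lambda>i. \<tau> i / \<beta>)"
    using B \<beta>0 by (auto simp: is_svd_def antimono_upto_def sum_divide_distrib divide_right_mono)
  have "(\<Sum>i<K. (a i - b i)\<^sup>2)
      \<le> frob_inner R C (\<lambda>r c. A r c / \<alpha> - B r c / \<beta>) (\<lambda>r c. A r c / \<alpha> - B r c / \<beta>)"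
    using Mirsky_inequality[OF A' B' kK lK] unfolding zero_pad_divide a_def b_def .
  moreover have "(\<Sum>i<K. (a i)\<^sup>2) = 1" "(\<Sum>i<K. (b i)\<^sup>2) = 1"
    using frob_inner_self_zero_pad[OF A(1) kK] frob_inner_self_zero_pad[OF B(1) lK] tA tB
    by (simp_all add: a_def b_def \<alpha>_def \<beta>_def power_divide sum_divide_distrib[symmetric])
  ultimately have "(\<Sum>i<K. \<bar>(a i)\<^sup>2 - (b i)\<^sup>2\<bar>)
      \<le> 2 * sqrt (frob_inner R C (\<lambda>r c. A r c / \<alpha> - B r c / \<beta>) (\<lambda>r c. A r c / \<alpha> - B r c / \<beta>))"
    using sum_abs_diff_squares_le[where K = K and a = a and b = b] real_sqrt_le_mono by (smt (verit))
  moreover have "(a i)\<^sup>2 = (zero_pad k \<sigma> i)\<^sup>2 / frob_inner R C A A"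
    "(b i)\<^sup>2 = (zero_pad l \<tau> i)\<^sup>2 / frob_inner R C B B" for i
    using tA tB by (simp_all add: a_def b_def \<alpha>_def \<beta>_def power_divide)
  ultimately show ?thesis
    using that QE_mat_eq_entropy[OF fin A(1) tA] QE_mat_eq_entropy[OF fin B(1) tB]
      prob_vector_svd[OF fin A(1) tA] prob_vector_svd[OF fin B(1) tB]
    unfolding K_def by simp
qed

lemma frob_dist_normalized_le:
  assumes B: "frob_inner R C B B = \<beta>\<^sup>2" "\<beta> > 0"
    and D: "frob_inner R C (\<lambda>r c. A r c - B r c) (\<lambda>r c. A r c - B r c) \<le> d\<^sup>2" "0 \<le> d" "d < \<beta>"
  defines "\<alpha> \<equiv> sqrt (frob_inner R C A A)"
  shows "\<alpha> > 0"
    and "frob_inner R C (\<lambda>r c. A r c / \<alpha> - B r c / \<beta>) (\<lambda>r c. A r c / \<alpha> - B r c / \<beta>)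
          \<le> d\<^sup>2 / (\<beta> * (\<beta> - d))"
proof -
  define P where "P = frob_inner R C A B"
  define Dv where "Dv = frob_inner R C (\<lambda>r c. A r c - B r c) (\<lambda>r c. A r c - B r c)"
  have aa: "frob_inner R C A A = \<alpha>\<^sup>2" unfolding \<alpha>_def using frob_inner_nonneg[of R C A] by simp
  have Dv_eq: "Dv = \<alpha>\<^sup>2 - 2 * P + \<beta>\<^sup>2" unfolding Dv_def frob_inner_diff_self P_def aa B(1) ..
  have "P \<le> \<alpha> * \<beta>"
    using frob_inner_Cauchy_Schwarz[of R C A B] B unfolding P_def \<alpha>_def by simp
  then have "(\<alpha> - \<beta>)\<^sup>2 \<le> d\<^sup>2" using Dv_eq D(1) by (simp add: Dv_def power2_diff)
  then have "\<bar>\<alpha> - \<beta>\<bar> \<le> d" using D(2) by (simp add: abs_le_square_iff[symmetric] power2_abs)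
  then have a_ge: "\<alpha> \<ge> \<beta> - d" by simp
  then show "\<alpha> > 0" using D(3) by simp
  have "frob_inner R C (\<lambda>r c. A r c / \<alpha> - B r c / \<beta>) (\<lambda>r c. A r c / \<alpha> - B r c / \<beta>)
      = (Dv - (\<alpha> - \<beta>)\<^sup>2) / (\<alpha> * \<beta>)"
    unfolding frob_inner_diff_self frob_inner_divide Dv_eq P_def[symmetric] aa B(1)
    using \<open>\<alpha> > 0\<close> B(2) by (simp add: field_simps power2_eq_square)
  also have "\<dots> \<le> d\<^sup>2 / (\<alpha> * \<beta>)"
  proof (rule divide_right_mono)
    show "Dv - (\<alpha> - \<beta>)\<^sup>2 \<le> d\<^sup>2" using D(1) zero_le_power2[of "\<alpha> - \<beta>"] unfolding Dv_def by linarith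
  qed (use \<open>\<alpha> > 0\<close> B(2) in simp)
  also have "\<dots> \<le> d\<^sup>2 / (\<beta> * (\<beta> - d))"
    using a_ge B(2) D(3) \<open>\<alpha> > 0\<close> by (intro divide_left_mono) (auto simp: mult.commute mult_right_mono)
  finally show "frob_inner R C (\<lambda>r c. A r c / \<alpha> - B r c / \<beta>) (\<lambda>r c. A r c / \<alpha> - B r c / \<beta>)
      \<le> d\<^sup>2 / (\<beta> * (\<beta> - d))" .
qed

section \<open>Continuity of Shannon entropy and of entanglement\<close>

definition eta :: "real \<Rightarrow> real" where "eta x = (if x = 0 then 0 else - (x * ln x))"

lemma entropy_eq_sum_eta: "entropy K p = (\<Sum>i<K. eta (p i))"
  unfolding entropy_def eta_def by (simp add: sum_negf[symmetric] if_distrib cong: if_cong)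

lemma eta_nonneg: "0 \<le> x \<Longrightarrow> x \<le> 1 \<Longrightarrow> 0 \<le> eta x"
  unfolding eta_def by (auto simp: mult_nonneg_nonpos)

lemma eta_add_le:
  assumes "0 \<le> x" "0 \<le> d"
  shows "eta (x + d) \<le> eta x + eta d"
proof (cases "x = 0 \<or> d = 0")
  case True then show ?thesis using assms by (auto simp: eta_def)
next
  case False
  then have x: "x > 0" and d: "d > 0" using assms by auto
  have "ln x \<le> ln (x + d)" "ln d \<le> ln (x + d)" using x d by auto
  then have "x * ln x + d * ln d \<le> x * ln (x + d) + d * ln (x + d)"
    using x d by (intro add_mono mult_left_mono) auto
  then show ?thesis using x d by (simp add: eta_def algebra_simps)
qed

lemma eta_diff_le:
  assumes "0 \<le> x" "0 \<le> d" "x + d \<le> 1"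
  shows "eta x - eta (x + d) \<le> d"
proof (cases "x = 0 \<or> d = 0")
  case True
  then show ?thesis
  proof
    assume "x = 0"
    moreover have "0 \<le> eta (x + d)" using assms by (intro eta_nonneg) auto
    ultimately show ?thesis using assms by (simp add: eta_def)
  next
    assume "d = 0" then show ?thesis by simp
  qed
next
  case False
  then have x: "x > 0" and d: "d > 0" using assms by auto
  have "eta x - eta (x + d) = x * ln ((x + d) / x) + d * ln (x + d)"
    using x d by (simp add: eta_def ln_div algebra_simps)
  also have "x * ln ((x + d) / x) = x * ln (1 + d / x)" using x by (simp add: field_simps)
  also have "\<dots> \<le> x * (d / x)" using x d by (intro mult_left_mono ln_add_one_self_le_self) auto
  also have "\<dots> = d" using x by simp
  also have "d * ln (x + d) \<le> 0" using x d assms(3) by (simp add: mult_nonneg_nonpos)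
  finally show ?thesis by simp
qed

lemma self_le_eta:
  assumes "0 \<le> d" "d \<le> exp (-1)"
  shows "d \<le> eta d"
proof (cases "d = 0")
  case True then show ?thesis by (simp add: eta_def)
next
  case False
  then have "d > 0" using assms by simp
  then have "ln d \<le> -1" using assms(2) by (metis ln_exp ln_le_cancel_iff exp_gt_zero)
  then have "d * ln d \<le> d * (-1)" using \<open>d > 0\<close> by (intro mult_left_mono) auto
  then show ?thesis using \<open>d > 0\<close> by (simp add: eta_def)
qed

lemma abs_eta_diff_le:
  assumes "0 \<le> x" "x \<le> 1" "0 \<le> y" "y \<le> 1" "\<bar>x - y\<bar> \<le> exp (-1)"
  shows "\<bar>eta x - eta y\<bar> \<le> eta \<bar>x - y\<bar>"
proof -
  have main: "\<bar>eta a - eta b\<bar> \<le> eta (b - a)" if ab: "0 \<le> a" "a \<le> b" "b \<le> 1" "b - a \<le> exp (-1)" for a b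
  proof -
    have 1: "eta b - eta a \<le> eta (b - a)" using eta_add_le[of a "b - a"] ab by simp
    have "eta a - eta b \<le> b - a" using eta_diff_le[of a "b - a"] ab by simp
    also have "\<dots> \<le> eta (b - a)" using self_le_eta[of "b - a"] ab by simp
    finally show ?thesis using 1 by (simp add: abs_le_iff)
  qed
  show ?thesis
  proof (cases "x \<le> y")
    case True then show ?thesis using main[of x y] assms by (simp add: abs_minus_commute)
  next
    case False then show ?thesis using main[of y x] assms by (simp add: abs_minus_commute)
  qed
qed

lemma sum_eta_le_ln_card:
  assumes "prob_vector K w" "K > 0"
  shows "(\<Sum>i<K. eta (w i)) \<le> ln (real K)"
proof -
  have w0: "\<forall>i. w i \<ge> 0" and w1: "(\<Sum>i<K. w i) = 1" using assms(1) by (auto simp: prob_vector_def)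
  have "eta (w i) - w i * ln (real K) \<le> 1 / real K - w i" for i
  proof (cases "w i = 0")
    case True then show ?thesis using assms(2) by (simp add: eta_def)
  next
    case False
    then have wp: "w i > 0" using w0[rule_format, of i] by linarith
    have "eta (w i) - w i * ln (real K) = w i * ln (1 / (real K * w i))"
      using wp assms(2) by (simp add: eta_def ln_div ln_mult algebra_simps)
    also have "\<dots> \<le> w i * (1 / (real K * w i) - 1)"
      using wp assms(2) by (intro mult_left_mono ln_le_minus_one) auto
    also have "\<dots> = 1 / real K - w i" using wp assms(2) by (simp add: field_simps)
    finally show ?thesis .
  qed
  then have "(\<Sum>i<K. eta (w i) - w i * ln (real K)) \<le> (\<Sum>i<K. 1 / real K - w i)"
    by (intro sum_mono)
  also have "\<dots> = 0" using assms(2) w1 by (simp add: sum_subtractf)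
  finally show ?thesis using w1 by (simp add: sum_subtractf sum_distrib_right[symmetric])
qed

lemma prob_vector_le_1: "prob_vector K p \<Longrightarrow> i < K \<Longrightarrow> p i \<le> 1"
  unfolding prob_vector_def by (metis finite_lessThan lessThan_iff member_le_sum)

lemma entropy_bounds:
  assumes "prob_vector K p" "K > 0"
  shows "0 \<le> entropy K p" "entropy K p \<le> ln (real K)"
  unfolding entropy_eq_sum_eta
  using assms prob_vector_le_1[OF assms(1)]
  by (auto simp: prob_vector_def intro!: sum_nonneg eta_nonneg sum_eta_le_ln_card)

lemma eta_eq_rescaled:
  assumes "t \<ge> 0" "s > 0"
  shows "eta t = s * eta (t / s) + (t / s) * eta s"
proof (cases "t = 0")
  case True then show ?thesis by (simp add: eta_def)
next
  case False
  then have "t > 0" using assms by simp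
  then show ?thesis using assms by (simp add: eta_def ln_div algebra_simps)
qed

lemma Fannes_inequality:
  assumes p: "prob_vector K p" and q: "prob_vector K q" and K: "K > 0"
    and s: "(\<Sum>i<K. \<bar>p i - q i\<bar>) \<le> exp (-1)"
  shows "\<bar>entropy K p - entropy K q\<bar> \<le> (\<Sum>i<K. \<bar>p i - q i\<bar>) * ln (real K) + eta (\<Sum>i<K. \<bar>p i - q i\<bar>)"
proof -
  define t where "t i = \<bar>p i - q i\<bar>" for i
  define s where "s = (\<Sum>i<K. t i)"
  have ti: "t i \<le> s" if "i < K" for i unfolding s_def using that by (intro member_le_sum) (auto simp: t_def)
  have "\<bar>entropy K p - entropy K q\<bar> = \<bar>\<Sum>i<K. eta (p i) - eta (q i)\<bar>" by (simp add: entropy_eq_sum_eta sum_subtractf)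
  also have "\<dots> \<le> (\<Sum>i<K. \<bar>eta (p i) - eta (q i)\<bar>)" by (rule sum_abs)
  also have "\<dots> \<le> (\<Sum>i<K. eta (t i))"
  proof (intro sum_mono)
    fix i assume "i \<in> {..<K}"
    then have "i < K" by simp
    show "\<bar>eta (p i) - eta (q i)\<bar> \<le> eta (t i)" unfolding t_def
      using p q prob_vector_le_1[OF p \<open>i < K\<close>] prob_vector_le_1[OF q \<open>i < K\<close>] ti[OF \<open>i < K\<close>] s
      by (intro abs_eta_diff_le) (auto simp: prob_vector_def t_def s_def)
  qed
  also have "\<dots> \<le> s * ln (real K) + eta s"
  proof (cases "s = 0")
    case True
    then have "t i = 0" if "i < K" for i using ti[OF that] by (simp add: t_def)
    then show ?thesis using True by (simp add: eta_def)
  next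
    case False
    have "s \<ge> 0" unfolding s_def t_def by (intro sum_nonneg) simp
    then have sp: "s > 0" using False by simp
    have "(\<Sum>i<K. eta (t i)) = (\<Sum>i<K. s * eta (t i / s) + (t i / s) * eta s)"
      by (intro sum.cong refl eta_eq_rescaled) (auto simp: t_def sp)
    also have "\<dots> = s * (\<Sum>i<K. eta (t i / s)) + eta s"
      using sp by (simp add: sum.distrib sum_distrib_left sum_distrib_right[symmetric] sum_divide_distrib[symmetric] s_def)
    also have "\<dots> \<le> s * ln (real K) + eta s"
    proof -
      have "prob_vector K (\<lambda>i. t i / s)" unfolding prob_vector_def using sp
        by (auto simp: t_def s_def sum_divide_distrib[symmetric])
      then have "(\<Sum>i<K. eta (t i / s)) \<le> ln (real K)" by (rule sum_eta_le_ln_card[OF _ K])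
      then show ?thesis using sp by simp
    qed
    finally show ?thesis .
  qed
  finally show ?thesis unfolding s_def t_def .
qed

lemma eta_mono_le_exp_minus_one:
  assumes "0 \<le> a" "a \<le> b" "b \<le> exp (-1)"
  shows "eta a \<le> eta b"
proof (cases "a = 0 \<or> a = b")
  case True
  have "exp (-1) \<le> (1::real)" by simp
  then have b1: "b \<le> 1" using assms(3) by linarith
  have "0 \<le> eta b" using assms b1 by (intro eta_nonneg) auto
  then show ?thesis using True by (auto simp: eta_def)
next
  case False
  then have a: "a > 0" and ab: "a < b" using assms by auto
  have der: "DERIV (\<lambda>x. - (x * ln x)) x :> - (ln x + 1)" if "a \<le> x" for x
  proof -
    have "x > 0" using a that by simp
    then show ?thesis by (auto intro!: derivative_eq_intros)
  qed
  obtain z where z: "a < z" "z < b" "- (b * ln b) - - (a * ln a) = (b - a) * (- (ln z + 1))"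
    using MVT2[OF ab, of "\<lambda>x. - (x * ln x)" "\<lambda>x. - (ln x + 1)"] der by blast
  have "z > 0" using a z by simp
  have "ln z < -1" using z(2) assms(3) \<open>z > 0\<close> by (metis less_le_trans ln_exp ln_less_cancel_iff exp_gt_zero)
  then have "(b - a) * (- (ln z + 1)) \<ge> 0" using ab by simp
  then show ?thesis using z(3) a ab by (simp add: eta_def)
qed

lemma one_plus_three_mult_le_exp: "(1::real) + 3 * w \<le> 1.65 * exp w" if "w \<ge> 0"
proof -
  have "1 + w + w\<^sup>2 / 2 \<le> exp w" by (rule exp_lower_Taylor_quadratic[OF that])
  moreover have "1 + 3 * w \<le> 1.65 * (1 + w + w\<^sup>2 / 2)"
  proof -
    have h0: "0 \<le> (33/40) * (w - 9/11)\<^sup>2" by simp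
    have h1: "(33/40) * (w - 9/11)\<^sup>2 = (33/40) * (w * w) - (27/20) * w + 2673/4840"
      by (simp add: power2_eq_square algebra_simps)
    have h2: "1.65 * (1 + w + w\<^sup>2 / 2) - (1 + 3 * w) = (33/40) * (w * w) - (27/20) * w + 13/20"
      by (simp add: power2_eq_square algebra_simps)
    show ?thesis using h0 h1 h2 by linarith
  qed
  moreover have "1.65 * (1 + w + w\<^sup>2 / 2) \<le> 1.65 * exp w"
    using \<open>1 + w + w\<^sup>2 / 2 \<le> exp w\<close> by (rule mult_left_mono) simp
  ultimately show ?thesis by linarith
qed

lemma add_three_mult_ln_inverse_le:
  assumes "0 < z" "z \<le> 1"
  shows "z + 3 * z * ln (1 / z) \<le> (1.65::real)"
proof -
  define w where "w = ln (1 / z)"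
  have w0: "w \<ge> 0" using assms by (simp add: w_def)
  have "w = - ln z" using assms by (simp add: w_def ln_div)
  then have z: "z = exp (- w)" using assms by simp
  have "z + 3 * z * ln (1 / z) = z * (1 + 3 * w)" by (simp add: w_def algebra_simps)
  also have "\<dots> = exp (- w) * (1 + 3 * w)" using z by simp
  also have "\<dots> \<le> exp (- w) * (1.65 * exp w)" by (intro mult_left_mono one_plus_three_mult_le_exp w0) simp
  also have "\<dots> = 1.65" by (simp add: exp_minus field_simps)
  finally show ?thesis .
qed

lemma exp_minus_one_ge: "(0.3672::real) \<le> exp (-1)"
proof -
  have "exp 1 < (272/100::real)" by (rule e_less_272)
  then have "1 / (272/100) < 1 / exp (1::real)" by (intro divide_strict_left_mono) auto
  then show ?thesis by (simp add: exp_minus inverse_eq_divide)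
qed

text \<open>Where the constants come from: \<open>0.3672 \<le> exp (-1)\<close> keeps \<open>s\<close> in the range where \<open>eta\<close> increases,
  and \<open>sqrt 0.3672 * 1.65 \<le> 1\<close>.\<close>

lemma Fannes_bound_le_linear:
  fixes L x s :: real
  assumes L: "L \<ge> 2/3" and x: "0 < x" "x \<le> 1" and s: "0 \<le> s" "s \<le> 0.3672 * x\<^sup>2"
  shows "s * L + eta s \<le> x * L"
proof -
  define c :: real where "c = 0.3672"
  define z where "z = sqrt c * x"
  have c0: "c > 0" by (simp add: c_def)
  have cz: "c * x\<^sup>2 = z\<^sup>2" by (simp add: z_def power_mult_distrib c0 less_imp_le)
  have z0: "z > 0" using x c0 by (simp add: z_def)
  have sc1: "sqrt c * 1.65 \<le> 1"
  proof -
    have "sqrt c * 1.65 = sqrt (c * 1.65\<^sup>2)" by (simp add: real_sqrt_mult)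
    also have "\<dots> \<le> sqrt 1" by (intro real_sqrt_le_mono) (simp add: c_def power2_eq_square)
    finally show ?thesis by simp
  qed
  have sc: "sqrt c < 1" using sc1 c0 by (simp add: c_def)
  have z1: "z \<le> 1" unfolding z_def using sc x c0 by (intro mult_le_one) auto
  have cx1: "c * x\<^sup>2 \<le> exp (-1)"
  proof -
    have "x\<^sup>2 \<le> 1" using x by (simp add: power_le_one)
    then have "c * x\<^sup>2 \<le> c" using c0 by (simp add: mult_left_le)
    then show ?thesis using exp_minus_one_ge by (simp add: c_def)
  qed
  have "s * L + eta s \<le> (c * x\<^sup>2) * L + eta (c * x\<^sup>2)"
  proof (rule add_mono)
    show "s * L \<le> c * x\<^sup>2 * L" using s L by (intro mult_right_mono) (auto simp: c_def)
    show "eta s \<le> eta (c * x\<^sup>2)" using s cx1 by (intro eta_mono_le_exp_minus_one) (auto simp: c_def)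
  qed
  also have "eta (c * x\<^sup>2) = 2 * z\<^sup>2 * ln (1 / z)"
    unfolding cz using z0 by (simp add: eta_def ln_div ln_realpow[symmetric] power2_eq_square ln_mult)
  also have "c * x\<^sup>2 * L + 2 * z\<^sup>2 * ln (1 / z) = z * (z * L + 2 * z * ln (1 / z))"
    unfolding cz by (simp add: power2_eq_square algebra_simps)
  also have "\<dots> \<le> z * (1.65 * L)"
  proof (rule mult_left_mono)
    have za: "z + 3 * z * ln (1 / z) \<le> 1.65" by (rule add_three_mult_ln_inverse_le[OF z0 z1])
    have "2 * z * ln (1 / z) \<le> (2/3) * (1.65 - z)" using za by simp
    also have "\<dots> \<le> L * (1.65 - z)" using L z1 by (intro mult_right_mono) auto
    finally show "z * L + 2 * z * ln (1 / z) \<le> 1.65 * L" by (simp add: algebra_simps)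
  qed (use z0 in simp)
  also have "\<dots> = (sqrt c * 1.65) * (x * L)" by (simp add: z_def)
  also have "\<dots> \<le> 1 * (x * L)" using sc1 x L by (intro mult_right_mono) auto
  finally show ?thesis by simp
qed

lemma QE_mat_bounds:
  assumes "finite R" "finite C" "min (card R) (card C) > 0"
  shows "0 \<le> QE_mat R C A" "QE_mat R C A \<le> ln (real (min (card R) (card C)))"
proof -
  have "0 \<le> QE_mat R C A \<and> QE_mat R C A \<le> ln (real (min (card R) (card C)))"
  proof (cases "frob_inner R C A A = 0")
    case True
    then show ?thesis using QE_mat_eq_0[OF assms(1,2)] assms(3) by simp
  next
    case False
    then have t: "frob_inner R C A A > 0" using frob_inner_nonneg[of R C A] by simp
    obtain k \<sigma> u v where s: "is_svd R C A k \<sigma> u v" using svd_exists[OF assms(1,2)] by blast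
    show ?thesis unfolding QE_mat_eq_entropy[OF assms(1,2) s t]
      using entropy_bounds[OF prob_vector_svd[OF assms(1,2) s t] assms(3)] by simp
  qed
  then show "0 \<le> QE_mat R C A" "QE_mat R C A \<le> ln (real (min (card R) (card C)))" by auto
qed

text \<open>The constant \<open>0.167\<close> is chosen so that \<open>4 * 0.167\<^sup>2 / 0.833 \<le> 0.3672\<^sup>2\<close>, the threshold of
  \<open>Fannes_bound_le_linear\<close>.\<close>

lemma normalized_distance_bound:
  fixes d x \<epsilon> :: real
  assumes "0 \<le> d" "d \<le> 0.167 * x\<^sup>2 * \<epsilon>" "0 < x" "x \<le> 1" "\<epsilon> > 0"
  shows "d < \<epsilon>" "2 * sqrt (d\<^sup>2 / (\<epsilon> * (\<epsilon> - d))) \<le> 0.3672 * x\<^sup>2"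
proof -
  have x2: "x\<^sup>2 \<le> 1" using assms(3,4) by (simp add: power_le_one)
  then have "0.167 * x\<^sup>2 * \<epsilon> \<le> 0.167 * \<epsilon>" using assms(5) by simp
  then have d: "d \<le> 0.167 * \<epsilon>" using assms(2) by linarith
  then show "d < \<epsilon>" using assms(5) by simp
  have "d\<^sup>2 / (\<epsilon> * (\<epsilon> - d)) \<le> (0.167 * x\<^sup>2 * \<epsilon>)\<^sup>2 / (\<epsilon> * (0.833 * \<epsilon>))"
    using assms d by (intro frac_le power_mono mult_left_mono) auto
  also have "\<dots> = (0.167\<^sup>2 / 0.833) * (x\<^sup>2)\<^sup>2"
    using assms(5) by (simp add: power2_eq_square field_simps)
  also have "\<dots> \<le> (0.3672 / 2)\<^sup>2 * (x\<^sup>2)\<^sup>2"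
    by (intro mult_right_mono) (simp_all add: power2_eq_square)
  also have "\<dots> = (0.3672 * x\<^sup>2 / 2)\<^sup>2"
    by (simp add: power2_eq_square)
  finally have "sqrt (d\<^sup>2 / (\<epsilon> * (\<epsilon> - d))) \<le> 0.3672 * x\<^sup>2 / 2"
    using real_sqrt_le_mono by fastforce
  then show "2 * sqrt (d\<^sup>2 / (\<epsilon> * (\<epsilon> - d))) \<le> 0.3672 * x\<^sup>2" by simp
qed

text \<open>Mirsky's inequality makes the squared normalized singular values \<open>\<ell>\<^sub>1\<close>-close, and Fannes'
  inequality turns this into closeness of the entropies.\<close>

lemma QE_mat_diff_le:
  assumes fin: "finite R" "finite C" and K: "min (card R) (card C) > 0"
    and L: "ln (real (min (card R) (card C))) \<le> L" "2/3 \<le> L" and x: "0 < x" "x \<le> 1"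
    and B: "frob_inner R C B B = \<epsilon>\<^sup>2" "\<epsilon> > 0"
    and AB: "sqrt (frob_inner R C (\<lambda>r c. A r c - B r c) (\<lambda>r c. A r c - B r c)) \<le> 0.167 * x\<^sup>2 * \<epsilon>"
  shows "\<bar>QE_mat R C A - QE_mat R C B\<bar> \<le> x * L"
proof -
  define K where "K = min (card R) (card C)"
  define d where "d = sqrt (frob_inner R C (\<lambda>r c. A r c - B r c) (\<lambda>r c. A r c - B r c))"
  have d0: "0 \<le> d" by (simp add: d_def frob_inner_nonneg)
  have d_sq: "frob_inner R C (\<lambda>r c. A r c - B r c) (\<lambda>r c. A r c - B r c) = d\<^sup>2"
    by (simp add: d_def frob_inner_nonneg)
  have de: "d < \<epsilon>" and dist: "2 * sqrt (d\<^sup>2 / (\<epsilon> * (\<epsilon> - d))) \<le> 0.3672 * x\<^sup>2"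
    using normalized_distance_bound[OF d0 AB[folded d_def] x B(2)] by auto
  have tA: "frob_inner R C A A > 0"
    using frob_dist_normalized_le(1)[OF B d_sq[THEN eq_refl] d0 de] by simp
  have tB: "frob_inner R C B B > 0" using B by simp
  obtain p q where pq: "QE_mat R C A = entropy K p" "QE_mat R C B = entropy K q"
      "prob_vector K p" "prob_vector K q"
    and l1: "(\<Sum>i<K. \<bar>p i - q i\<bar>) \<le> 2 * sqrt (frob_inner R C
        (\<lambda>r c. A r c / sqrt (frob_inner R C A A) - B r c / sqrt (frob_inner R C B B))
        (\<lambda>r c. A r c / sqrt (frob_inner R C A A) - B r c / sqrt (frob_inner R C B B)))"
    by (rule QE_mat_entropy_l1_close[OF fin tA tB, folded K_def])
  define s where "s = (\<Sum>i<K. \<bar>p i - q i\<bar>)"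
  have s0: "0 \<le> s" by (simp add: s_def sum_nonneg)
  have sB: "sqrt (frob_inner R C B B) = \<epsilon>" using B by simp
  have "s \<le> 2 * sqrt (d\<^sup>2 / (\<epsilon> * (\<epsilon> - d)))"
    using l1 real_sqrt_le_mono[OF frob_dist_normalized_le(2)[OF B d_sq[THEN eq_refl] d0 de]]
    unfolding s_def sB by linarith
  then have sx: "s \<le> 0.3672 * x\<^sup>2" using dist by linarith
  have "x\<^sup>2 \<le> 1" using x by (simp add: power_le_one)
  then have "0.3672 * x\<^sup>2 \<le> 0.3672" by simp
  then have "s \<le> exp (-1)" using sx exp_minus_one_ge by linarith
  then have "\<bar>entropy K p - entropy K q\<bar> \<le> s * ln (real K) + eta s"
    unfolding s_def using Fannes_inequality[OF pq(3,4)] K by (simp add: K_def)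
  also have "\<dots> \<le> s * L + eta s" using L(1) s0 by (simp add: K_def mult_left_mono)
  also have "\<dots> \<le> x * L" by (rule Fannes_bound_le_linear[OF L(2) x s0 sx])
  finally show ?thesis using pq by simp
qed

section \<open>McDiarmid's inequality\<close>

definition bounded_differences :: "'i set \<Rightarrow> 'a measure \<Rightarrow> real \<Rightarrow> (('i \<Rightarrow> 'a) \<Rightarrow> real) \<Rightarrow> bool" where
  "bounded_differences I M c f \<longleftrightarrow>
     (\<forall>x\<in>space (PiM I (\<lambda>_. M)). \<forall>i\<in>I. \<forall>y\<in>space M. \<bar>f (x(i := y)) - f x\<bar> \<le> c)"

lemma fun_upd_in_space_PiM_insert:
  "x \<in> space (PiM I (\<lambda>_. M)) \<Longrightarrow> y \<in> space M \<Longrightarrow> x(i := y) \<in> space (PiM (insert i I) (\<lambda>_. M))"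
  unfolding space_PiM by (auto simp: PiE_iff extensional_def)

lemma fun_upd_in_space_PiM:
  "x \<in> space (PiM I (\<lambda>_. M)) \<Longrightarrow> y \<in> space M \<Longrightarrow> j \<in> I \<Longrightarrow> x(j := y) \<in> space (PiM I (\<lambda>_. M))"
  unfolding space_PiM by (auto simp: PiE_iff extensional_def)

lemma measurable_PiM_component_comp:
  assumes "m \<in> I" "h \<in> M \<rightarrow>\<^sub>M N"
  shows "(\<lambda>\<omega>. h (\<omega> m)) \<in> PiM I (\<lambda>_. M) \<rightarrow>\<^sub>M N"
  using measurable_compose[OF measurable_component_singleton[OF assms(1)] assms(2)] by simp

lemma abs_le_1_if_sum_squares_le_1:
  fixes Y :: "'b \<Rightarrow> real"
  assumes "finite T" "i \<in> T" "(\<Sum>j\<in>T. (Y j)\<^sup>2) \<le> 1"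
  shows "\<bar>Y i\<bar> \<le> 1"
proof -
  have "(Y i)\<^sup>2 \<le> (\<Sum>j\<in>T. (Y j)\<^sup>2)" using assms(1,2) by (intro member_le_sum) auto
  then have "(Y i)\<^sup>2 \<le> 1" using assms(3) by linarith
  then show ?thesis by (simp add: abs_square_le_1)
qed

lemma abs_mean_le:
  fixes a :: "nat \<Rightarrow> real"
  assumes "n > 0" "\<And>m. m < n \<Longrightarrow> \<bar>a m\<bar> \<le> B"
  shows "\<bar>(1 / real n) * (\<Sum>m<n. a m)\<bar> \<le> B"
proof -
  have "\<bar>\<Sum>m<n. a m\<bar> \<le> (\<Sum>m<n. B)" using assms(2) by (intro order_trans[OF sum_abs] sum_mono) auto
  then show ?thesis using assms(1) by (simp add: abs_mult field_simps)
qed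

context prob_space
begin

lemma abs_integral_le_bound:
  fixes h :: "'a \<Rightarrow> real"
  assumes "h \<in> borel_measurable M" "\<And>y. y \<in> space M \<Longrightarrow> \<bar>h y\<bar> \<le> B"
  shows "\<bar>\<integral>y. h y \<partial>M\<bar> \<le> B"
proof -
  have int: "integrable M h"
    by (rule integrable_const_bound[where B=B]) (use assms in auto)
  have "\<bar>\<integral>y. h y \<partial>M\<bar> \<le> (\<integral>y. \<bar>h y\<bar> \<partial>M)" by (rule integral_abs_bound)
  also have "\<dots> \<le> (\<integral>y. B \<partial>M)"
    by (intro integral_mono) (use assms int in auto)
  finally show ?thesis by (simp add: prob_space)
qed

lemma Hoeffdings_lemma_oscillation:
  fixes F :: "'a \<Rightarrow> real"
  assumes F: "F \<in> borel_measurable M" "\<And>y. y \<in> space M \<Longrightarrow> \<bar>F y\<bar> \<le> B"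
    and osc: "\<And>y y'. y \<in> space M \<Longrightarrow> y' \<in> space M \<Longrightarrow> F y - F y' \<le> c" and l: "l > 0"
  shows "(\<integral>\<^sup>+y. ennreal (exp (l * (F y - expectation F))) \<partial>M) \<le> ennreal (exp (l\<^sup>2 * c\<^sup>2 / 8))"
proof -
  define a where "a = Inf (F ` space M)"
  have bdd: "bdd_below (F ` space M)"
    using F(2) by (intro bdd_belowI[of _ "-B"]) (force simp: abs_le_iff)
  have "a \<le> F y" if "y \<in> space M" for y unfolding a_def using bdd that by (intro cInf_lower) auto
  moreover have "F y \<le> a + c" if "y \<in> space M" for y
  proof -
    have "F y - c \<le> a" unfolding a_def
      using not_empty osc that by (intro cInf_greatest) (auto simp: algebra_simps)
    then show ?thesis by simp
  qed
  ultimately interpret interval_bounded_random_variable M F a "a + c"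
    using F(1) by unfold_locales auto
  show ?thesis using Hoeffdings_lemma_nn_integral[OF l] by simp
qed

lemma bounded_differences_integral_fun_upd:
  fixes f :: "('i \<Rightarrow> 'a) \<Rightarrow> real"
  assumes i: "i \<notin> I" and fm: "f \<in> borel_measurable (PiM (insert i I) (\<lambda>_. M))"
    and fB: "\<And>x. x \<in> space (PiM (insert i I) (\<lambda>_. M)) \<Longrightarrow> \<bar>f x\<bar> \<le> B"
    and fc: "bounded_differences (insert i I) M c f"
  shows "bounded_differences I M c (\<lambda>x. \<integral>y. f (x(i := y)) \<partial>M)"
  unfolding bounded_differences_def
proof (intro ballI)
  fix x j y assume x: "x \<in> space (PiM I (\<lambda>_. M))" and j: "j \<in> I" and y: "y \<in> space M"
  have xj: "x(j := y) \<in> space (PiM I (\<lambda>_. M))" by (rule fun_upd_in_space_PiM[OF x y j])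
  have m: "(\<lambda>y'. f (z(i := y'))) \<in> borel_measurable M" if "z \<in> space (PiM I (\<lambda>_. M))" for z
    using measurable_component_update[OF that i] fm by (rule measurable_compose)
  have int: "integrable M (\<lambda>y'. f (z(i := y')))" if "z \<in> space (PiM I (\<lambda>_. M))" for z
    using m[OF that] fB fun_upd_in_space_PiM_insert[OF that]
    by (intro integrable_const_bound[where B=B]) auto
  have "(\<integral>y'. f (x(j := y, i := y')) \<partial>M) - (\<integral>y'. f (x(i := y')) \<partial>M)
      = (\<integral>y'. f (x(j := y, i := y')) - f (x(i := y')) \<partial>M)"
    using int[OF xj] int[OF x] by simp
  also have "\<bar>\<dots>\<bar> \<le> c"
  proof (rule abs_integral_le_bound)
    show "(\<lambda>y'. f (x(j := y, i := y')) - f (x(i := y'))) \<in> borel_measurable M"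
      using m[OF xj] m[OF x] by measurable
    fix y' assume y': "y' \<in> space M"
    have "x(j := y, i := y') = (x(i := y'))(j := y)" using i j by (auto simp: fun_upd_twist)
    then show "\<bar>f (x(j := y, i := y')) - f (x(i := y'))\<bar> \<le> c"
      using fc fun_upd_in_space_PiM_insert[OF x y'] y j by (auto simp: bounded_differences_def)
  qed
  finally show "\<bar>(\<integral>y'. f ((x(j := y))(i := y')) \<partial>M) - (\<integral>y'. f (x(i := y')) \<partial>M)\<bar> \<le> c" .
qed

lemma integral_fun_upd_measurable:
  fixes f :: "('i \<Rightarrow> 'a) \<Rightarrow> real"
  assumes "i \<notin> I" "f \<in> borel_measurable (PiM (insert i I) (\<lambda>_. M))"
  shows "(\<lambda>x. \<integral>y. f (x(i := y)) \<partial>M) \<in> borel_measurable (PiM I (\<lambda>_. M))"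
proof -
  have "(\<lambda>(x, y). f (x(i := y))) \<in> borel_measurable (PiM I (\<lambda>_. M) \<Otimes>\<^sub>M M)"
    using measurable_compose[OF measurable_add_dim[of i I "\<lambda>_. M"] assms(2)] by (simp add: split_beta')
  then show ?thesis by (intro borel_measurable_lebesgue_integral) simp
qed

lemma abs_integral_fun_upd_le:
  fixes f :: "('i \<Rightarrow> 'a) \<Rightarrow> real"
  assumes "i \<notin> I" "f \<in> borel_measurable (PiM (insert i I) (\<lambda>_. M))"
    and "\<And>x. x \<in> space (PiM (insert i I) (\<lambda>_. M)) \<Longrightarrow> \<bar>f x\<bar> \<le> B" and "x \<in> space (PiM I (\<lambda>_. M))"
  shows "\<bar>\<integral>y. f (x(i := y)) \<partial>M\<bar> \<le> B"
  using measurable_component_update[OF assms(4,1)] assms(2-4)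
  by (intro abs_integral_le_bound) (auto intro: measurable_compose fun_upd_in_space_PiM_insert)

text \<open>One step of the martingale argument behind McDiarmid's inequality: conditionally on the
  other coordinates, coordinate \<open>i\<close> moves \<open>f\<close> within an interval of length \<open>c\<close>, so Hoeffding's
  lemma bounds its contribution to the moment generating function.\<close>

lemma nn_integral_exp_insert_le:
  fixes f :: "('i \<Rightarrow> 'a) \<Rightarrow> real"
  assumes I: "finite I" "i \<notin> I" and fm[measurable]: "f \<in> borel_measurable (PiM (insert i I) (\<lambda>_. M))"
    and fB: "\<And>x. x \<in> space (PiM (insert i I) (\<lambda>_. M)) \<Longrightarrow> \<bar>f x\<bar> \<le> B"
    and fc: "bounded_differences (insert i I) M c f" and l: "l > 0"
  defines "g \<equiv> \<lambda>x. \<integral>y. f (x(i := y)) \<partial>M"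
  shows "(\<integral>\<^sup>+x. ennreal (exp (l * (f x - (\<integral>x. f x \<partial>PiM (insert i I) (\<lambda>_. M))))) \<partial>PiM (insert i I) (\<lambda>_. M))
           \<le> (\<integral>\<^sup>+x. ennreal (exp (l * (g x - (\<integral>x. g x \<partial>PiM I (\<lambda>_. M))))) \<partial>PiM I (\<lambda>_. M))
              * ennreal (exp (l\<^sup>2 * c\<^sup>2 / 8))"
proof -
  let ?P = "PiM I (\<lambda>_. M)" and ?P' = "PiM (insert i I) (\<lambda>_. M)"
  interpret PS: product_prob_space "\<lambda>_. M" by (rule product_prob_spaceI) (rule prob_space_axioms)
  interpret P': prob_space ?P' by (rule prob_space_PiM) (rule prob_space_axioms)
  have fy_m: "(\<lambda>y. f (x(i := y))) \<in> borel_measurable M" if "x \<in> space ?P" for x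
    using measurable_component_update[OF that I(2)] fm by (rule measurable_compose)
  have gm[measurable]: "g \<in> borel_measurable ?P"
    unfolding g_def by (rule integral_fun_upd_measurable[OF I(2) fm])
  define Ef where "Ef = (\<integral>x. f x \<partial>?P')"
  have "integrable ?P' f"
    by (rule P'.integrable_const_bound[where B=B]) (use fB in auto)
  then have Eg: "(\<integral>x. g x \<partial>?P) = Ef"
    unfolding g_def Ef_def by (rule PS.product_integral_insert[symmetric, OF I])
  have hoeff: "(\<integral>\<^sup>+y. ennreal (exp (l * (f (x(i := y)) - g x))) \<partial>M) \<le> ennreal (exp (l\<^sup>2 * c\<^sup>2 / 8))"
    if x: "x \<in> space ?P" for x
  proof -
    have osc: "f (x(i := y)) - f (x(i := y')) \<le> c" if "y \<in> space M" "y' \<in> space M" for y y'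
      using fc fun_upd_in_space_PiM_insert[OF x that(2)] that(1) by (force simp: bounded_differences_def)
    have bnd: "\<bar>f (x(i := y))\<bar> \<le> B" if "y \<in> space M" for y
      using fB fun_upd_in_space_PiM_insert[OF x that] by blast
    show ?thesis unfolding g_def by (rule Hoeffdings_lemma_oscillation[OF fy_m[OF x] bnd osc l])
  qed
  have "(\<integral>\<^sup>+x. ennreal (exp (l * (f x - Ef))) \<partial>?P')
      = (\<integral>\<^sup>+x. (\<integral>\<^sup>+y. ennreal (exp (l * (g x - Ef))) * ennreal (exp (l * (f (x(i := y)) - g x))) \<partial>M) \<partial>?P)"
    by (subst PS.product_nn_integral_insert[OF I]) (measurable, auto intro!: nn_integral_cong
        simp: ennreal_mult[symmetric] exp_add[symmetric] algebra_simps)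
  also have "\<dots> = (\<integral>\<^sup>+x. ennreal (exp (l * (g x - Ef)))
                        * (\<integral>\<^sup>+y. ennreal (exp (l * (f (x(i := y)) - g x))) \<partial>M) \<partial>?P)"
    using fy_m by (intro nn_integral_cong nn_integral_cmult) measurable
  also have "\<dots> \<le> (\<integral>\<^sup>+x. ennreal (exp (l * (g x - Ef))) * ennreal (exp (l\<^sup>2 * c\<^sup>2 / 8)) \<partial>?P)"
    by (intro nn_integral_mono mult_left_mono hoeff) auto
  also have "\<dots> = (\<integral>\<^sup>+x. ennreal (exp (l * (g x - Ef))) \<partial>?P) * ennreal (exp (l\<^sup>2 * c\<^sup>2 / 8))"
    by (rule nn_integral_multc) measurable
  finally show ?thesis unfolding Eg Ef_def .
qed

lemma McDiarmid_mgf: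
  fixes f :: "('i \<Rightarrow> 'a) \<Rightarrow> real"
  assumes "finite I" "f \<in> borel_measurable (PiM I (\<lambda>_. M))"
    "\<And>x. x \<in> space (PiM I (\<lambda>_. M)) \<Longrightarrow> \<bar>f x\<bar> \<le> B" "bounded_differences I M c f" "l > 0"
  shows "(\<integral>\<^sup>+x. ennreal (exp (l * (f x - (\<integral>x. f x \<partial>PiM I (\<lambda>_. M))))) \<partial>PiM I (\<lambda>_. M))
           \<le> ennreal (exp (l\<^sup>2 * real (card I) * c\<^sup>2 / 8))"
  using assms
proof (induction I arbitrary: f rule: finite_induct)
  case empty
  have "space (PiM {} (\<lambda>_. M)) = {\<lambda>_. undefined}" by (simp add: PiM_empty)
  then show ?case
    by (simp add: PiM_empty lebesgue_integral_count_space_finite nn_integral_count_space_finite)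
next
  case (insert i I)
  note IH = insert.IH[OF integral_fun_upd_measurable[OF insert.hyps(2) insert.prems(1)]
      abs_integral_fun_upd_le[OF insert.hyps(2) insert.prems(1,2)]
      bounded_differences_integral_fun_upd[OF insert.hyps(2) insert.prems(1-3)] insert.prems(4)]
  have "ennreal (exp (l\<^sup>2 * real (card I) * c\<^sup>2 / 8)) * ennreal (exp (l\<^sup>2 * c\<^sup>2 / 8))
      = ennreal (exp (l\<^sup>2 * real (card (insert i I)) * c\<^sup>2 / 8))"
    using insert.hyps by (simp add: ennreal_mult[symmetric] exp_add[symmetric] algebra_simps add_divide_distrib)
  then show ?case
    using order_trans[OF nn_integral_exp_insert_le[OF insert.hyps insert.prems] mult_right_mono[OF IH]]
    by simp
qed

lemma McDiarmid_inequality: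
  fixes f :: "('i \<Rightarrow> 'a) \<Rightarrow> real"
  assumes I: "finite I" "I \<noteq> {}" and fm: "f \<in> borel_measurable (PiM I (\<lambda>_. M))"
    and fB: "\<And>x. x \<in> space (PiM I (\<lambda>_. M)) \<Longrightarrow> \<bar>f x\<bar> \<le> B"
    and fc: "bounded_differences I M c f" and c: "c > 0" and t: "t > 0"
  shows "measure (PiM I (\<lambda>_. M)) {x \<in> space (PiM I (\<lambda>_. M)). f x - (\<integral>x. f x \<partial>PiM I (\<lambda>_. M)) \<ge> t}
           \<le> exp (- 2 * t\<^sup>2 / (real (card I) * c\<^sup>2))"
proof -
  let ?P = "PiM I (\<lambda>_. M)"
  interpret P: prob_space ?P by (rule prob_space_PiM) (rule prob_space_axioms)
  define K where "K = real (card I)"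
  have K0: "K > 0" using I by (simp add: K_def card_gt_0_iff)
  define Ef where "Ef = (\<integral>x. f x \<partial>?P)"
  define l where "l = 4 * t / (K * c\<^sup>2)"
  have l0: "l > 0" using K0 c t by (simp add: l_def)
  define S where "S = {x \<in> space ?P. f x - Ef \<ge> t}"
  have "S \<in> sets ?P" unfolding S_def using fm by measurable
  then have "emeasure ?P S = (\<integral>\<^sup>+x. indicator S x \<partial>?P)" by simp
  also have "\<dots> \<le> (\<integral>\<^sup>+x. ennreal (exp (- (l * t))) * ennreal (exp (l * (f x - Ef))) \<partial>?P)"
  proof (intro nn_integral_mono)
    fix x assume x: "x \<in> space ?P"
    show "indicator S x \<le> ennreal (exp (- (l * t))) * ennreal (exp (l * (f x - Ef)))"
    proof (cases "x \<in> S")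
      case True
      then have "l * t \<le> l * (f x - Ef)" using l0 by (simp add: S_def)
      then have "1 \<le> exp (- (l * t)) * exp (l * (f x - Ef))" by (simp add: exp_add[symmetric])
      then show ?thesis using True by (simp add: ennreal_mult[symmetric])
    qed simp
  qed
  also have "\<dots> = ennreal (exp (- (l * t))) * (\<integral>\<^sup>+x. ennreal (exp (l * (f x - Ef))) \<partial>?P)"
    by (rule nn_integral_cmult) (use fm in measurable)
  also have "\<dots> \<le> ennreal (exp (- (l * t))) * ennreal (exp (l\<^sup>2 * K * c\<^sup>2 / 8))"
    using McDiarmid_mgf[OF I(1) fm fB fc l0] unfolding Ef_def K_def by (intro mult_left_mono) auto
  also have "\<dots> = ennreal (exp (- 2 * t\<^sup>2 / (K * c\<^sup>2)))"
  proof -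
    have "- (l * t) + l\<^sup>2 * K * c\<^sup>2 / 8 = - 2 * t\<^sup>2 / (K * c\<^sup>2)"
      using K0 c by (simp add: l_def power2_eq_square field_simps)
    then show ?thesis by (simp add: ennreal_mult[symmetric] exp_add[symmetric])
  qed
  finally show ?thesis unfolding S_def Ef_def K_def by (simp add: P.emeasure_eq_measure)
qed

section \<open>Concentration of the empirical mean of bounded random vectors\<close>

lemma PiM_integral_component:
  fixes h :: "'a \<Rightarrow> real"
  assumes "m \<in> I" "h \<in> borel_measurable M"
  shows "(\<integral>\<omega>. h (\<omega> m) \<partial>PiM I (\<lambda>_. M)) = (\<integral>z. h z \<partial>M)"
proof -
  have "distr (PiM I (\<lambda>_. M)) M (\<lambda>\<omega>. \<omega> m) = M"
    by (rule distr_PiM_component) (use assms prob_space_axioms in auto)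
  then show ?thesis
    using integral_distr[of "\<lambda>\<omega>. \<omega> m" "PiM I (\<lambda>_. M)" M h] assms by simp
qed

lemma PiM_integral_product_pair:
  fixes h1 h2 :: "'a \<Rightarrow> real"
  assumes I: "finite I" "m \<in> I" "m' \<in> I" "m \<noteq> m'" and h: "integrable M h1" "integrable M h2"
  shows "(\<integral>\<omega>. h1 (\<omega> m) * h2 (\<omega> m') \<partial>PiM I (\<lambda>_. M)) = (\<integral>z. h1 z \<partial>M) * (\<integral>z. h2 z \<partial>M)"
proof -
  interpret PS: product_prob_space "\<lambda>_. M" by (rule product_prob_spaceI) (rule prob_space_axioms)
  define F where "F j = (if j = m then h1 else if j = m' then h2 else (\<lambda>_. 1::real))" for j
  have int: "integrable M (F j)" for j using h by (simp add: F_def)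
  have split: "(\<Prod>j\<in>I. G j) = G m * G m' * (\<Prod>j\<in>I - {m} - {m'}. G j)" for G :: "_ \<Rightarrow> real"
    using I by (simp add: prod.remove[of I m] prod.remove[of "I - {m}" m'] mult.assoc)
  have "(\<integral>\<omega>. (\<Prod>j\<in>I. F j (\<omega> j)) \<partial>PiM I (\<lambda>_. M)) = (\<Prod>j\<in>I. integral\<^sup>L M (F j))"
    by (rule PS.product_integral_prod[OF I(1) int])
  then show ?thesis
    unfolding split using I by (simp add: F_def prob_space)
qed

lemma integrable_PiM_sq_mean:
  fixes h :: "'a \<Rightarrow> real"
  assumes hm: "h \<in> borel_measurable M" and hB: "\<And>z. z \<in> space M \<Longrightarrow> \<bar>h z\<bar> \<le> B" and n: "n > 0"
  shows "integrable (PiM {0..<n} (\<lambda>_. M)) (\<lambda>\<omega>. ((1 / real n) * (\<Sum>m<n. h (\<omega> m)))\<^sup>2)"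
proof -
  let ?P = "PiM {0..<n} (\<lambda>_. M)"
  interpret P: prob_space ?P by (rule prob_space_PiM) (rule prob_space_axioms)
  have "((1 / real n) * (\<Sum>m<n. h (\<omega> m)))\<^sup>2 \<le> B\<^sup>2" if "\<omega> \<in> space ?P" for \<omega>
    using abs_mean_le[OF n, of "\<lambda>m. h (\<omega> m)" B] hB that
    by (metis abs_ge_zero power2_abs power_mono PiE_mem atLeastLessThan_iff less_eq_nat.simps(1) space_PiM)
  moreover have "(\<lambda>\<omega>. h (\<omega> m)) \<in> borel_measurable ?P" if "m < n" for m
    using that by (intro measurable_PiM_component_comp hm) simp
  ultimately show ?thesis by (intro P.integrable_const_bound[where B="B\<^sup>2"]) auto
qed

text \<open>The cross terms vanish by independence.\<close>

lemma expectation_sq_mean_centered: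
  fixes h :: "'a \<Rightarrow> real"
  assumes hm: "h \<in> borel_measurable M" and hB: "\<And>z. z \<in> space M \<Longrightarrow> \<bar>h z\<bar> \<le> B"
    and h0: "(\<integral>z. h z \<partial>M) = 0" and n: "n > 0"
  shows "(\<integral>\<omega>. ((1 / real n) * (\<Sum>m<n. h (\<omega> m)))\<^sup>2 \<partial>PiM {0..<n} (\<lambda>_. M)) = (\<integral>z. (h z)\<^sup>2 \<partial>M) / real n"
proof -
  let ?P = "PiM {0..<n} (\<lambda>_. M)"
  interpret P: prob_space ?P by (rule prob_space_PiM) (rule prob_space_axioms)
  have hint: "integrable M h"
    using hm hB by (intro integrable_const_bound[where B=B]) auto
  have hcomp: "(\<lambda>\<omega>. h (\<omega> m)) \<in> borel_measurable ?P" if "m < n" for m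
    using that by (intro measurable_PiM_component_comp hm) simp
  have hbound: "\<bar>h (\<omega> m)\<bar> \<le> B" if "\<omega> \<in> space ?P" "m < n" for \<omega> m
    using hB that by (auto simp: space_PiM PiE_iff)
  have int2: "integrable ?P (\<lambda>\<omega>. h (\<omega> m) * h (\<omega> m'))" if "m < n" "m' < n" for m m'
  proof (rule P.integrable_const_bound[where B="B * B"])
    show "AE x in ?P. norm (h (x m) * h (x m')) \<le> B * B"
    proof (rule AE_I2)
      fix x assume "x \<in> space ?P"
      then have "\<bar>h (x m)\<bar> \<le> B" "\<bar>h (x m')\<bar> \<le> B" using hbound that by auto
      then have "\<bar>h (x m)\<bar> * \<bar>h (x m')\<bar> \<le> B * B"
        by (meson abs_ge_zero mult_mono order_trans)
      then show "norm (h (x m) * h (x m')) \<le> B * B" by (simp add: abs_mult)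
    qed
  qed (use hcomp that in measurable)
  have cross: "(\<integral>\<omega>. h (\<omega> m) * h (\<omega> m') \<partial>?P) = (if m = m' then (\<integral>z. (h z)\<^sup>2 \<partial>M) else 0)"
    if "m < n" "m' < n" for m m'
    using that PiM_integral_component[of m "{0..<n}" "\<lambda>z. (h z)\<^sup>2"]
      PiM_integral_product_pair[of "{0..<n}" m m' h h] hm hint h0
    by (auto simp: power2_eq_square)
  have "(\<integral>\<omega>. (\<Sum>m<n. \<Sum>m'<n. h (\<omega> m) * h (\<omega> m')) \<partial>?P)
      = (\<Sum>m<n. \<integral>\<omega>. (\<Sum>m'<n. h (\<omega> m) * h (\<omega> m')) \<partial>?P)"
    by (rule Bochner_Integration.integral_sum) (auto intro!: Bochner_Integration.integrable_sum int2)
  also have "\<dots> = (\<Sum>m<n. \<Sum>m'<n. \<integral>\<omega>. h (\<omega> m) * h (\<omega> m') \<partial>?P)"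
    by (intro sum.cong refl Bochner_Integration.integral_sum) (auto intro!: int2)
  also have "\<dots> = real n * (\<integral>z. (h z)\<^sup>2 \<partial>M)"
    by (simp add: cross)
  finally have "(\<integral>\<omega>. (\<Sum>m<n. \<Sum>m'<n. h (\<omega> m) * h (\<omega> m')) \<partial>?P) = real n * (\<integral>z. (h z)\<^sup>2 \<partial>M)" .
  moreover have "((1 / real n) * (\<Sum>m<n. h (\<omega> m)))\<^sup>2 = (\<Sum>m<n. \<Sum>m'<n. h (\<omega> m) * h (\<omega> m')) / (real n)\<^sup>2"
    for \<omega> :: "nat \<Rightarrow> 'a"
    by (simp add: power2_eq_square sum_product power_divide)
  ultimately show ?thesis using n by (simp add: power2_eq_square)
qed

lemma expectation_sq_dist_empirical_mean_le:
  fixes Y :: "'a \<Rightarrow> 'b \<Rightarrow> real"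
  assumes T: "finite T" and n: "n > 0"
    and Ym: "\<And>i. i \<in> T \<Longrightarrow> (\<lambda>z. Y z i) \<in> borel_measurable M"
    and Y1: "\<And>z. z \<in> space M \<Longrightarrow> (\<Sum>i\<in>T. (Y z i)\<^sup>2) \<le> 1"
  shows "(\<integral>\<omega>. (\<Sum>i\<in>T. ((1 / real n) * (\<Sum>m<n. Y (\<omega> m) i) - (\<integral>z. Y z i \<partial>M))\<^sup>2) \<partial>PiM {0..<n} (\<lambda>_. M))
           \<le> 1 / real n"
proof -
  let ?P = "PiM {0..<n} (\<lambda>_. M)"
  have Yb: "\<bar>Y z i\<bar> \<le> 1" if "z \<in> space M" "i \<in> T" for z i
    using abs_le_1_if_sum_squares_le_1[OF T that(2) Y1[OF that(1)]] .
  have Yint: "integrable M (\<lambda>z. Y z i)" if "i \<in> T" for i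
    by (rule integrable_const_bound[where B=1]) (use Yb Ym that in auto)
  define h where "h i z = Y z i - (\<integral>z. Y z i \<partial>M)" for i z
  have hm: "h i \<in> borel_measurable M" if "i \<in> T" for i unfolding h_def using Ym[OF that] by measurable
  have hB: "\<bar>h i z\<bar> \<le> 2" if "i \<in> T" "z \<in> space M" for i z
  proof -
    have "\<bar>\<integral>z. Y z i \<partial>M\<bar> \<le> 1"
      by (rule abs_integral_le_bound[OF Ym[OF that(1)]]) (rule Yb[OF _ that(1)])
    then show ?thesis
      using Yb[OF that(2,1)] abs_triangle_ineq4[of "Y z i" "\<integral>z. Y z i \<partial>M"] unfolding h_def by linarith
  qed
  have h0: "(\<integral>z. h i z \<partial>M) = 0" if "i \<in> T" for i
    unfolding h_def using Yint[OF that] by (simp add: prob_space)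
  have var: "(\<integral>z. (h i z)\<^sup>2 \<partial>M) \<le> (\<integral>z. (Y z i)\<^sup>2 \<partial>M)" if "i \<in> T" for i
  proof -
    have "integrable M (\<lambda>z. (Y z i)\<^sup>2)"
      using Yb Ym[OF that] that by (intro integrable_const_bound[where B=1]) (auto simp: abs_square_le_1)
    then show ?thesis
      using variance_eq[OF Yint[OF that]] variance_positive[of "\<lambda>z. Y z i"] by (simp add: h_def)
  qed
  have "(\<integral>\<omega>. (\<Sum>i\<in>T. ((1 / real n) * (\<Sum>m<n. Y (\<omega> m) i) - (\<integral>z. Y z i \<partial>M))\<^sup>2) \<partial>?P)
      = (\<integral>\<omega>. (\<Sum>i\<in>T. ((1 / real n) * (\<Sum>m<n. h i (\<omega> m)))\<^sup>2) \<partial>?P)"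
    using n by (simp add: h_def sum_subtractf field_simps)
  also have "\<dots> = (\<Sum>i\<in>T. \<integral>\<omega>. ((1 / real n) * (\<Sum>m<n. h i (\<omega> m)))\<^sup>2 \<partial>?P)"
    using integrable_PiM_sq_mean[OF hm hB n] by (intro Bochner_Integration.integral_sum) auto
  also have "\<dots> = (\<Sum>i\<in>T. (\<integral>z. (h i z)\<^sup>2 \<partial>M) / real n)"
    using expectation_sq_mean_centered[OF hm hB h0 n] by simp
  also have "\<dots> \<le> (\<Sum>i\<in>T. (\<integral>z. (Y z i)\<^sup>2 \<partial>M)) / real n"
    unfolding sum_divide_distrib[symmetric] using var by (intro divide_right_mono sum_mono) auto
  also have "(\<Sum>i\<in>T. (\<integral>z. (Y z i)\<^sup>2 \<partial>M)) = (\<integral>z. (\<Sum>i\<in>T. (Y z i)\<^sup>2) \<partial>M)"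
    using Yb Ym by (intro Bochner_Integration.integral_sum[symmetric] integrable_const_bound[where B=1])
      (auto simp: abs_square_le_1)
  also have "\<dots> \<le> 1"
    using abs_integral_le_bound[of "\<lambda>z. \<Sum>i\<in>T. (Y z i)\<^sup>2" 1] Y1 Ym by (force simp: sum_nonneg)
  finally show ?thesis using n by (simp add: divide_right_mono)
qed

lemma sum_sq_dist_empirical_mean_le:
  fixes Y :: "'a \<Rightarrow> 'b \<Rightarrow> real"
  assumes T: "finite T" and n: "n > 0"
    and Ym: "\<And>i. i \<in> T \<Longrightarrow> (\<lambda>z. Y z i) \<in> borel_measurable M"
    and Y1: "\<And>z. z \<in> space M \<Longrightarrow> (\<Sum>i\<in>T. (Y z i)\<^sup>2) \<le> 1"
    and \<omega>: "\<omega> \<in> space (PiM {0..<n} (\<lambda>_. M))"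
  shows "(\<Sum>i\<in>T. ((1 / real n) * (\<Sum>m<n. Y (\<omega> m) i) - (\<integral>z. Y z i \<partial>M))\<^sup>2) \<le> 4 * real (card T)"
proof -
  have "((1 / real n) * (\<Sum>m<n. Y (\<omega> m) i) - (\<integral>z. Y z i \<partial>M))\<^sup>2 \<le> 2\<^sup>2" if i: "i \<in> T" for i
  proof -
    have Yb: "\<bar>Y z i\<bar> \<le> 1" if "z \<in> space M" for z
      using abs_le_1_if_sum_squares_le_1[OF T i Y1[OF that]] .
    have "\<bar>(1 / real n) * (\<Sum>m<n. Y (\<omega> m) i)\<bar> \<le> 1"
      using \<omega> by (intro abs_mean_le[OF n] Yb) (auto simp: space_PiM PiE_iff)
    moreover have "\<bar>\<integral>z. Y z i \<partial>M\<bar> \<le> 1" by (rule abs_integral_le_bound[OF Ym[OF i] Yb])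
    ultimately have "\<bar>(1 / real n) * (\<Sum>m<n. Y (\<omega> m) i) - (\<integral>z. Y z i \<partial>M)\<bar> \<le> 2" by linarith
    then show ?thesis by (metis abs_ge_zero power2_abs power_mono)
  qed
  then have "(\<Sum>i\<in>T. ((1 / real n) * (\<Sum>m<n. Y (\<omega> m) i) - (\<integral>z. Y z i \<partial>M))\<^sup>2) \<le> (\<Sum>i\<in>T. 2\<^sup>2)"
    by (intro sum_mono)
  then show ?thesis by simp
qed

lemma expectation_L2_dist_empirical_mean_le:
  fixes Y :: "'a \<Rightarrow> 'b \<Rightarrow> real"
  assumes T: "finite T" and n: "n > 0"
    and Ym: "\<And>i. i \<in> T \<Longrightarrow> (\<lambda>z. Y z i) \<in> borel_measurable M"
    and Y1: "\<And>z. z \<in> space M \<Longrightarrow> (\<Sum>i\<in>T. (Y z i)\<^sup>2) \<le> 1"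
  shows "(\<integral>\<omega>. L2_set (\<lambda>i. (1 / real n) * (\<Sum>m<n. Y (\<omega> m) i) - (\<integral>z. Y z i \<partial>M)) T \<partial>PiM {0..<n} (\<lambda>_. M))
           \<le> 1 / sqrt (real n)"
proof -
  let ?P = "PiM {0..<n} (\<lambda>_. M)"
  interpret P: prob_space ?P by (rule prob_space_PiM) (rule prob_space_axioms)
  define g where "g \<omega> = (\<Sum>i\<in>T. ((1 / real n) * (\<Sum>m<n. Y (\<omega> m) i) - (\<integral>z. Y z i \<partial>M))\<^sup>2)" for \<omega>
  have g0: "g \<omega> \<ge> 0" for \<omega> unfolding g_def by (intro sum_nonneg) simp
  have gm: "g \<in> borel_measurable ?P"
    unfolding g_def using Ym by (auto intro!: borel_measurable_sum borel_measurable_power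
        borel_measurable_diff borel_measurable_times measurable_PiM_component_comp)
  have gB: "g \<omega> \<le> 4 * real (card T)" if "\<omega> \<in> space ?P" for \<omega>
    unfolding g_def by (rule sum_sq_dist_empirical_mean_le[OF T n Ym Y1 that])
  have gint: "integrable ?P g"
    using gm gB g0 by (intro P.integrable_const_bound[where B="4 * real (card T)"]) auto
  have sqint: "integrable ?P (\<lambda>\<omega>. sqrt (g \<omega>))"
    using gm gB g0 by (intro P.integrable_const_bound[where B="sqrt (4 * real (card T))"]) auto
  have "(\<integral>\<omega>. sqrt (g \<omega>) \<partial>?P)\<^sup>2 \<le> (\<integral>\<omega>. g \<omega> \<partial>?P)"
    using P.variance_eq[OF sqint] P.variance_positive[of "\<lambda>\<omega>. sqrt (g \<omega>)"] gint g0 by simp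
  also have "\<dots> \<le> 1 / real n"
    unfolding g_def by (rule expectation_sq_dist_empirical_mean_le[OF T n Ym Y1])
  finally have "(\<integral>\<omega>. sqrt (g \<omega>) \<partial>?P) \<le> sqrt (1 / real n)"
    using real_le_rsqrt by blast
  then show ?thesis unfolding L2_set_def g_def[symmetric] by (simp add: real_sqrt_divide)
qed

end

lemma bounded_differences_L2_dist_mean:
  fixes Y :: "'a \<Rightarrow> 'b \<Rightarrow> real" and \<mu> :: "'b \<Rightarrow> real"
  assumes n: "n > 0" and Y1: "\<And>z. z \<in> space M \<Longrightarrow> L2_set (Y z) T \<le> 1"
  shows "bounded_differences {0..<n} M (2 / real n) (\<lambda>x. L2_set (\<lambda>i. (1 / real n) * (\<Sum>m<n. Y (x m) i) - \<mu> i) T)"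
  unfolding bounded_differences_def
proof (intro ballI)
  fix x m y assume x: "x \<in> space (PiM {0..<n} (\<lambda>_. M))" and m: "m \<in> {0..<n}" and y: "y \<in> space M"
  define v where "v x' i = (1 / real n) * (\<Sum>m<n. Y (x' m) i) - \<mu> i" for x' i
  define w where "w i = (1 / real n) * (Y y i + - Y (x m) i)" for i
  have sum_upd: "(\<Sum>m'<n. Y ((x(m := y)) m') i) = (\<Sum>m'<n. Y (x m') i) + (Y y i - Y (x m) i)" for i
  proof -
    have "(\<Sum>m'<n. Y ((x(m := y)) m') i) = (\<Sum>m'<n. Y (x m') i + (if m' = m then Y y i - Y (x m) i else 0))"
      by (intro sum.cong refl) auto
    then show ?thesis using m by (simp add: sum.distrib)
  qed
  have diff: "v (x(m := y)) i = v x i + w i" for i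
    unfolding v_def w_def sum_upd by (simp add: algebra_simps)
  have "x m \<in> space M" using x m by (auto simp: space_PiM PiE_iff)
  have "L2_set w T = (1 / real n) * L2_set (\<lambda>i. Y y i + - Y (x m) i) T"
    unfolding w_def using L2_set_right_distrib[of "1 / real n" "\<lambda>i. Y y i + - Y (x m) i" T] by simp
  also have "\<dots> \<le> (1 / real n) * (L2_set (Y y) T + L2_set (\<lambda>i. - Y (x m) i) T)"
    by (intro mult_left_mono L2_set_triangle_ineq) simp
  also have "\<dots> \<le> (1 / real n) * (1 + 1)"
    using Y1[OF y] Y1[OF \<open>x m \<in> space M\<close>] by (intro mult_left_mono add_mono) (auto simp: L2_set_def)
  finally have L2w: "L2_set w T \<le> 2 / real n" by simp
  have "L2_set (v (x(m := y))) T \<le> L2_set (v x) T + L2_set w T"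
    unfolding diff by (rule L2_set_triangle_ineq)
  moreover have "L2_set (v x) T \<le> L2_set (v (x(m := y))) T + L2_set w T"
    using L2_set_triangle_ineq[of "v (x(m := y))" "\<lambda>i. - w i" T] unfolding diff
    by (simp add: L2_set_def)
  ultimately show "\<bar>L2_set (v (x(m := y))) T - L2_set (v x) T\<bar> \<le> 2 / real n"
    using L2w by linarith
qed

context prob_space
begin

lemma empirical_mean_concentration_bounded:
  fixes Y :: "'a \<Rightarrow> 'b \<Rightarrow> real"
  assumes T: "finite T" and n: "n > 0"
    and Ym: "\<And>i. i \<in> T \<Longrightarrow> (\<lambda>z. Y z i) \<in> borel_measurable M"
    and Y1: "\<And>z. z \<in> space M \<Longrightarrow> (\<Sum>i\<in>T. (Y z i)\<^sup>2) \<le> 1"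
    and \<delta>: "0 < \<delta>" "\<delta> < 1"
  shows "\<exists>E\<in>sets (PiM {0..<n} (\<lambda>_. M)). measure (PiM {0..<n} (\<lambda>_. M)) E \<ge> 1 - \<delta> \<and>
           (\<forall>\<omega>\<in>E. L2_set (\<lambda>i. (1 / real n) * (\<Sum>m<n. Y (\<omega> m) i) - (\<integral>z. Y z i \<partial>M)) T
                    \<le> 1 / sqrt (real n) + sqrt (2 * ln (1 / \<delta>) / real n))"
proof -
  let ?P = "PiM {0..<n} (\<lambda>_. M)"
  interpret P: prob_space ?P by (rule prob_space_PiM) (rule prob_space_axioms)
  define F where "F \<omega> = L2_set (\<lambda>i. (1 / real n) * (\<Sum>m<n. Y (\<omega> m) i) - (\<integral>z. Y z i \<partial>M)) T" for \<omega>
  define t where "t = sqrt (2 * ln (1 / \<delta>) / real n)"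
  have t0: "t > 0" using \<delta> n by (simp add: t_def)
  have Fm: "F \<in> borel_measurable ?P"
    unfolding F_def L2_set_def using Ym
    by (auto intro!: borel_measurable_sum borel_measurable_power borel_measurable_diff
        borel_measurable_times measurable_PiM_component_comp measurable_compose[OF _ borel_measurable_sqrt])
  have FB: "\<bar>F \<omega>\<bar> \<le> sqrt (4 * real (card T))" if "\<omega> \<in> space ?P" for \<omega>
    using sum_sq_dist_empirical_mean_le[OF T n Ym Y1 that] unfolding F_def L2_set_def
    by (simp add: sum_nonneg)
  have "bounded_differences {0..<n} M (2 / real n) F"
    unfolding F_def using Y1 n by (intro bounded_differences_L2_dist_mean) (auto simp: L2_set_def)
  then have "measure ?P {\<omega> \<in> space ?P. F \<omega> - (\<integral>\<omega>. F \<omega> \<partial>?P) \<ge> t}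
      \<le> exp (- 2 * t\<^sup>2 / (real (card {0..<n}) * (2 / real n)\<^sup>2))"
    using n t0 by (intro McDiarmid_inequality[OF _ _ Fm FB]) auto
  also have "\<dots> = \<delta>"
    using n \<delta> by (simp add: t_def power2_eq_square field_simps ln_div)
  finally have tail: "measure ?P {\<omega> \<in> space ?P. F \<omega> - (\<integral>\<omega>. F \<omega> \<partial>?P) \<ge> t} \<le> \<delta>" .
  define E where "E = {\<omega> \<in> space ?P. F \<omega> - (\<integral>\<omega>. F \<omega> \<partial>?P) < t}"
  have E: "E \<in> sets ?P" unfolding E_def using Fm by measurable
  have "E = space ?P - {\<omega> \<in> space ?P. F \<omega> - (\<integral>\<omega>. F \<omega> \<partial>?P) \<ge> t}"
    unfolding E_def by auto
  then have "measure ?P E \<ge> 1 - \<delta>"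
    using tail P.prob_compl[of "{\<omega> \<in> space ?P. F \<omega> - (\<integral>\<omega>. F \<omega> \<partial>?P) \<ge> t}"] Fm by simp
  moreover have "(\<integral>\<omega>. F \<omega> \<partial>?P) \<le> 1 / sqrt (real n)"
    unfolding F_def by (rule expectation_L2_dist_empirical_mean_le[OF T n Ym Y1])
  then have "F \<omega> \<le> 1 / sqrt (real n) + t" if "\<omega> \<in> E" for \<omega>
    using that by (simp add: E_def)
  ultimately show ?thesis using E unfolding F_def t_def by blast
qed

lemma AE_PiM_all_components:
  assumes "finite I" "AE z in M. P z"
  shows "AE \<omega> in PiM I (\<lambda>_. M). \<forall>i\<in>I. P (\<omega> i)"
proof (rule AE_finite_allI[OF assms(1)])
  show "AE \<omega> in PiM I (\<lambda>_. M). P (\<omega> i)" if "i \<in> I" for i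
    using AE_PiM_component[where M = "\<lambda>_. M", OF _ that assms(2)] prob_space_axioms by blast
qed

text \<open>On the null set where the norm bound fails the vectors are replaced by 0, which changes
  neither the expectations nor, almost surely, the empirical means.\<close>

lemma empirical_mean_concentration:
  fixes X :: "'a \<Rightarrow> 'b \<Rightarrow> real"
  assumes T: "finite T" and n: "n > 0"
    and Xm: "\<And>i. i \<in> T \<Longrightarrow> (\<lambda>z. X z i) \<in> borel_measurable M"
    and X1: "AE z in M. (\<Sum>i\<in>T. (X z i)\<^sup>2) \<le> 1"
    and \<delta>: "0 < \<delta>" "\<delta> < 1"
  obtains E where "E \<in> sets (PiM {0..<n} (\<lambda>_. M))" "measure (PiM {0..<n} (\<lambda>_. M)) E \<ge> 1 - \<delta>"
    "\<And>\<omega>. \<omega> \<in> E \<Longrightarrow> L2_set (\<lambda>i. (1 / real n) * (\<Sum>m<n. X (\<omega> m) i) - (\<integral>z. X z i \<partial>M)) T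
                    \<le> 1 / sqrt (real n) + sqrt (2 * ln (1 / \<delta>) / real n)"
proof -
  let ?P = "PiM {0..<n} (\<lambda>_. M)"
  interpret P: prob_space ?P by (rule prob_space_PiM) (rule prob_space_axioms)
  define G where "G = {z \<in> space M. (\<Sum>i\<in>T. (X z i)\<^sup>2) \<le> 1}"
  have G: "G \<in> sets M" unfolding G_def using Xm by measurable
  have G_AE: "AE z in M. z \<in> G" using X1 by (auto simp: G_def)
  define Y where "Y z i = (if z \<in> G then X z i else 0)" for z i
  have Ym: "(\<lambda>z. Y z i) \<in> borel_measurable M" if "i \<in> T" for i
    unfolding Y_def by (rule measurable_If_set) (use Xm[OF that] G in auto)
  have Y1: "(\<Sum>i\<in>T. (Y z i)\<^sup>2) \<le> 1" for z
  proof (cases "z \<in> G")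
    case True then show ?thesis by (simp add: Y_def G_def)
  next
    case False then show ?thesis by (simp add: Y_def)
  qed
  have EY: "(\<integral>z. Y z i \<partial>M) = (\<integral>z. X z i \<partial>M)" if "i \<in> T" for i
    by (rule integral_cong_AE[OF Ym[OF that] Xm[OF that]]) (use G_AE in \<open>auto simp: Y_def\<close>)
  obtain E0 where E0: "E0 \<in> sets ?P" "measure ?P E0 \<ge> 1 - \<delta>"
    and bound: "\<And>\<omega>. \<omega> \<in> E0 \<Longrightarrow> L2_set (\<lambda>i. (1 / real n) * (\<Sum>m<n. Y (\<omega> m) i) - (\<integral>z. Y z i \<partial>M)) T
                    \<le> 1 / sqrt (real n) + sqrt (2 * ln (1 / \<delta>) / real n)"
    using empirical_mean_concentration_bounded[OF T n Ym Y1 \<delta>] by blast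
  define E where "E = E0 \<inter> {\<omega> \<in> space ?P. \<forall>m\<in>{0..<n}. \<omega> m \<in> G}"
  have E: "E \<in> sets ?P"
    unfolding E_def using E0(1) G
    by (intro sets.Int sets.sets_Collect_finite_All) (auto intro: measurable_sets[OF measurable_component_singleton])
  have "AE \<omega> in ?P. \<forall>m\<in>{0..<n}. \<omega> m \<in> G"
    by (rule AE_PiM_all_components[OF _ G_AE]) simp
  then have "measure ?P E = measure ?P E0"
    by (intro measure_eq_AE E E0(1)) (auto simp: E_def)
  moreover have "L2_set (\<lambda>i. (1 / real n) * (\<Sum>m<n. X (\<omega> m) i) - (\<integral>z. X z i \<partial>M)) T
      \<le> 1 / sqrt (real n) + sqrt (2 * ln (1 / \<delta>) / real n)" if "\<omega> \<in> E" for \<omega>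
  proof -
    have "(\<Sum>m<n. Y (\<omega> m) i) = (\<Sum>m<n. X (\<omega> m) i)" for i
      using that by (intro sum.cong refl) (auto simp: E_def Y_def)
    then have "L2_set (\<lambda>i. (1 / real n) * (\<Sum>m<n. X (\<omega> m) i) - (\<integral>z. X z i \<partial>M)) T
        = L2_set (\<lambda>i. (1 / real n) * (\<Sum>m<n. Y (\<omega> m) i) - (\<integral>z. Y z i \<partial>M)) T"
      using EY by (intro L2_set_cong) auto
    then show ?thesis using bound that by (simp add: E_def)
  qed
  ultimately show ?thesis using that E E0(2) by auto
qed

end

section \<open>Matricizations of tensors\<close>

definition merge_index :: "nat set \<Rightarrow> (nat \<Rightarrow> nat) \<Rightarrow> (nat \<Rightarrow> nat) \<Rightarrow> nat \<Rightarrow> nat" where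
  "merge_index J r c = (\<lambda>n. if n \<in> J then r n else c n)"

lemma bij_betw_merge_index:
  assumes J: "J \<subseteq> {0..<K}"
  shows "bij_betw (\<lambda>(r, c). merge_index J r c) (mat_rows K D J \<times> mat_cols K D J) (tidx K D)"
proof (rule bij_betw_byWitness[where f' = "\<lambda>i. (restrict i J, restrict i ({0..<K} - J))"])
  show "\<forall>x\<in>mat_rows K D J \<times> mat_cols K D J.
      (restrict ((\<lambda>(r, c). merge_index J r c) x) J, restrict ((\<lambda>(r, c). merge_index J r c) x) ({0..<K} - J)) = x"
    unfolding mat_rows_def mat_cols_def merge_index_def
    by (auto simp: PiE_iff extensional_def restrict_def fun_eq_iff)
  show "\<forall>i\<in>tidx K D. (\<lambda>(r, c). merge_index J r c) (restrict i J, restrict i ({0..<K} - J)) = i"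
    using J unfolding tidx_def merge_index_def by (auto simp: PiE_iff extensional_def fun_eq_iff)
  show "(\<lambda>(r, c). merge_index J r c) ` (mat_rows K D J \<times> mat_cols K D J) \<subseteq> tidx K D"
    using J unfolding mat_rows_def mat_cols_def tidx_def merge_index_def
    by (auto simp: PiE_iff extensional_def)
  show "(\<lambda>i. (restrict i J, restrict i ({0..<K} - J))) ` tidx K D \<subseteq> mat_rows K D J \<times> mat_cols K D J"
    using J unfolding mat_rows_def mat_cols_def tidx_def by (auto simp: PiE_iff)
qed

lemma finite_mat_rows: "finite J \<Longrightarrow> finite (mat_rows K D J)"
  unfolding mat_rows_def by (intro finite_PiE) auto

lemma finite_mat_cols: "finite (mat_cols K D J)"
  unfolding mat_cols_def by (intro finite_PiE) auto

lemma finite_tidx: "finite (tidx K D)"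
  unfolding tidx_def by (intro finite_PiE) auto

lemma frob_inner_mat_arr:
  assumes "J \<subseteq> {0..<K}"
  shows "frob_inner (mat_rows K D J) (mat_cols K D J) (mat_arr J X) (mat_arr J Y) = (\<Sum>i\<in>tidx K D. X i * Y i)"
proof -
  have "frob_inner (mat_rows K D J) (mat_cols K D J) (mat_arr J X) (mat_arr J Y)
      = (\<Sum>z\<in>mat_rows K D J \<times> mat_cols K D J. (\<lambda>i. X i * Y i) ((\<lambda>(r, c). merge_index J r c) z))"
    unfolding frob_inner_def mat_arr_def merge_index_def by (simp add: sum.cartesian_product case_prod_beta)
  also have "\<dots> = (\<Sum>i\<in>tidx K D. X i * Y i)"
    by (rule sum.reindex_bij_betw[OF bij_betw_merge_index[OF assms]])
  finally show ?thesis .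
qed

lemma DJ_eq_min_card:
  assumes "J \<subseteq> {0..<K}"
  shows "DJ K D J = min (card (mat_rows K D J)) (card (mat_cols K D J))"
  using assms finite_subset[OF assms] by (simp add: DJ_def mat_rows_def mat_cols_def card_PiE)

lemma DJ_pos:
  assumes "J \<subseteq> {0..<K}" "\<And>n. n < K \<Longrightarrow> D n > 0"
  shows "DJ K D J > 0"
  using assms finite_subset[OF assms(1)] by (auto simp: DJ_def intro!: prod_pos)

lemma abs_QE_diff_le_ln_DJ:
  assumes J: "J \<subseteq> {0..<K}" and D: "\<And>n. n < K \<Longrightarrow> D n > 0"
  shows "\<bar>QE K D A J - QE K D B J\<bar> \<le> ln (real (DJ K D J))"
proof -
  have fin: "finite (mat_rows K D J)" "finite (mat_cols K D J)"
    using finite_subset[OF J] by (simp_all add: finite_mat_rows finite_mat_cols)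
  have "min (card (mat_rows K D J)) (card (mat_cols K D J)) > 0"
    using DJ_pos[where D = D, OF J D] DJ_eq_min_card[OF J] by simp
  then show ?thesis
    using QE_mat_bounds[OF fin, of "mat_arr J A"] QE_mat_bounds[OF fin, of "mat_arr J B"]
    unfolding QE_def DJ_eq_min_card[OF J] by (simp add: abs_le_iff)
qed

lemma QE_diff_le:
  fixes A B :: "(nat \<Rightarrow> nat) \<Rightarrow> real"
  assumes J: "J \<subseteq> {0..<K}" and D: "\<And>n. n < K \<Longrightarrow> D n > 0"
    and L: "ln (real (DJ K D J)) \<le> L" and \<gamma>: "\<gamma> > 0" and B: "tnorm K D B > 0"
    and AB: "\<gamma> < L \<Longrightarrow> sqrt (\<Sum>i\<in>tidx K D. (A i - B i)\<^sup>2) \<le> 0.167 * (\<gamma> / L)\<^sup>2 * tnorm K D B"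
  shows "\<bar>QE K D A J - QE K D B J\<bar> \<le> \<gamma>"
proof (cases "ln (real (DJ K D J)) \<le> \<gamma>")
  case True
  then show ?thesis using abs_QE_diff_le_ln_DJ[where D = D and A = A and B = B, OF J D] by simp
next
  case False
  let ?R = "mat_rows K D J" and ?C = "mat_cols K D J"
  have fin: "finite ?R" "finite ?C"
    using finite_subset[OF J] by (simp_all add: finite_mat_rows finite_mat_cols)
  define m where "m = min (card ?R) (card ?C)"
  have DJm: "DJ K D J = m" unfolding m_def by (rule DJ_eq_min_card[OF J])
  have "DJ K D J > 0" by (rule DJ_pos[where D = D, OF J D])
  then have K: "m > 0" and KL: "ln (real m) \<le> L" and \<gamma>m: "\<gamma> < ln (real m)"
    using L False unfolding DJm by auto
  then have "0 < ln (real m)" using \<gamma> by linarith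
  then have "1 < real m" using K ln_gt_zero_iff[of "real m"] by simp
  then have "ln 2 \<le> ln (real m)" by simp
  then have L23: "2/3 \<le> L" using ln2_ge_two_thirds KL by linarith
  have B2: "frob_inner ?R ?C (mat_arr J B) (mat_arr J B) = (tnorm K D B)\<^sup>2"
    using frob_inner_mat_arr[OF J] by (simp add: tnorm_def sum_nonneg power2_eq_square)
  have "frob_inner ?R ?C (\<lambda>r c. mat_arr J A r c - mat_arr J B r c) (\<lambda>r c. mat_arr J A r c - mat_arr J B r c)
      = (\<Sum>i\<in>tidx K D. (A i - B i)\<^sup>2)"
    using frob_inner_mat_arr[OF J, where X = "\<lambda>i. A i - B i" and Y = "\<lambda>i. A i - B i" and D = D]
    by (simp add: mat_arr_def power2_eq_square)
  then have "\<bar>QE_mat ?R ?C (mat_arr J A) - QE_mat ?R ?C (mat_arr J B)\<bar> \<le> \<gamma> / L * L"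
    using \<gamma>m KL \<gamma> AB
    by (intro QE_mat_diff_le[OF fin K[unfolded m_def] KL[unfolded m_def] L23 _ _ B2 B]) auto
  then show ?thesis using \<gamma>m KL \<gamma> by (simp add: QE_def)
qed

section \<open>Data tensors and sample size\<close>

lemma
  assumes "bij_betw \<mu> (grid N P) {0..<N ^ P}" "n < N ^ P"
  shows the_inv_into_grid_in: "the_inv_into (grid N P) \<mu> n \<in> grid N P"
    and f_the_inv_into_grid: "\<mu> (the_inv_into (grid N P) \<mu> n) = n"
  using assms by (auto simp: bij_betw_def the_inv_into_into f_the_inv_into_f)

lemma data_tensor_measurable:
  assumes bij: "bij_betw \<mu> (grid N P) {0..<N ^ P}"
    and x: "\<And>n j. n \<in> grid N P \<Longrightarrow> j < D (\<mu> n) \<Longrightarrow> (\<lambda>z. fst z n j) \<in> borel_measurable Dist"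
    and y: "snd \<in> borel_measurable Dist" and i: "i \<in> tidx (N ^ P) D"
  shows "(\<lambda>z. data_tensor N P \<mu> z i) \<in> borel_measurable Dist"
proof -
  have "(\<lambda>z. fst z (the_inv_into (grid N P) \<mu> n) (i n)) \<in> borel_measurable Dist" if "n < N ^ P" for n
    using i that the_inv_into_grid_in[OF bij that] f_the_inv_into_grid[OF bij that]
    by (intro x) (auto simp: tidx_def PiE_iff)
  then show ?thesis
    unfolding data_tensor_def using y by (intro borel_measurable_times borel_measurable_prod) auto
qed

lemma sum_sq_data_tensor:
  assumes bij: "bij_betw \<mu> (grid N P) {0..<N ^ P}"
  shows "(\<Sum>i\<in>tidx (N ^ P) D. (data_tensor N P \<mu> z i)\<^sup>2)
           = (snd z)\<^sup>2 * (\<Prod>n\<in>grid N P. \<Sum>j<D (\<mu> n). (fst z n j)\<^sup>2)"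
proof -
  let ?g = "the_inv_into (grid N P) \<mu>"
  have "(\<Sum>i\<in>tidx (N ^ P) D. (data_tensor N P \<mu> z i)\<^sup>2)
      = (snd z)\<^sup>2 * (\<Sum>i\<in>tidx (N ^ P) D. \<Prod>n\<in>{0..<N ^ P}. (fst z (?g n) (i n))\<^sup>2)"
    by (simp add: data_tensor_def power_mult_distrib prod_power_distrib atLeast0LessThan sum_distrib_left)
  also have "(\<Sum>i\<in>tidx (N ^ P) D. \<Prod>n\<in>{0..<N ^ P}. (fst z (?g n) (i n))\<^sup>2)
      = (\<Prod>n\<in>{0..<N ^ P}. \<Sum>j\<in>{0..<D n}. (fst z (?g n) j)\<^sup>2)"
    unfolding tidx_def by (rule prod_sum_PiE[symmetric]) auto
  also have "\<dots> = (\<Prod>n\<in>{0..<N ^ P}. (\<lambda>n'. \<Sum>j<D (\<mu> n'). (fst z n' j)\<^sup>2) (?g n))"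
    using f_the_inv_into_grid[OF bij] by (intro prod.cong refl) (simp add: atLeast0LessThan)
  also have "\<dots> = (\<Prod>n\<in>grid N P. \<Sum>j<D (\<mu> n). (fst z n j)\<^sup>2)"
    by (rule prod.reindex_bij_betw[OF bij_betw_the_inv_into[OF bij]])
  finally show ?thesis .
qed

lemma AE_sum_sq_data_tensor_le_1:
  assumes bij: "bij_betw \<mu> (grid N P) {0..<N ^ P}"
    and AE: "AE z in Dist. (\<forall>n\<in>grid N P. sqrt (\<Sum>j<D (\<mu> n). (fst z n j)\<^sup>2) \<le> 1) \<and> snd z \<in> {1, -1}"
  shows "AE z in Dist. (\<Sum>i\<in>tidx (N ^ P) D. (data_tensor N P \<mu> z i)\<^sup>2) \<le> 1"
  using AE
proof eventually_elim
  case (elim z)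
  have "(\<Prod>n\<in>grid N P. \<Sum>j<D (\<mu> n). (fst z n j)\<^sup>2) \<le> 1"
    using elim by (intro prod_le_1) (auto intro: sum_nonneg)
  then show ?case using elim unfolding sum_sq_data_tensor[OF bij] by auto
qed

lemma one_plus_sqrt_le:
  fixes v :: real
  assumes "v \<ge> 0"
  shows "1 + sqrt (2 * v) \<le> 0.167 * sqrt (128 * (ln 2 + v))"
proof -
  define w where "w = sqrt (2 * v)"
  have w0: "w \<ge> 0" and w2: "w\<^sup>2 = 2 * v" using assms by (simp_all add: w_def)
  have "0 \<le> (784896 / 1000000) * (w - 1000000 / 784896)\<^sup>2" by simp
  then have "(1 + w)\<^sup>2 \<le> 0.167\<^sup>2 * (128 * (2/3 + v))"
    unfolding power2_eq_square using w2 by (simp add: power2_eq_square algebra_simps)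
  also have "\<dots> \<le> 0.167\<^sup>2 * (128 * (ln 2 + v))" using ln2_ge_two_thirds by simp
  finally have "sqrt ((1 + w)\<^sup>2) \<le> sqrt (0.167\<^sup>2 * (128 * (ln 2 + v)))" by (rule real_sqrt_le_mono)
  then show ?thesis using w0 by (simp add: w_def real_sqrt_mult)
qed

lemma sample_size_bound:
  fixes M \<delta> \<gamma> L \<epsilon> :: real
  assumes M: "M > 0" and \<delta>: "0 < \<delta>" "\<delta> < 1" and \<gamma>: "\<gamma> > 0" "\<gamma> < L" and \<epsilon>: "\<epsilon> > 0"
    and Mb: "M \<ge> 128 * ln (2 / \<delta>) * L ^ 4 / (\<epsilon>\<^sup>2 * \<gamma> ^ 4)"
  shows "1 / sqrt M + sqrt (2 * ln (1 / \<delta>) / M) \<le> 0.167 * (\<gamma> / L)\<^sup>2 * \<epsilon>"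
proof -
  define l where "l = ln (2 / \<delta>)"
  have l: "l = ln 2 + ln (1 / \<delta>)" "ln (1 / \<delta>) \<ge> 0" using \<delta> by (simp_all add: l_def ln_div)
  have L0: "L > 0" using \<gamma> by simp
  have "128 * l * L ^ 4 / (\<epsilon>\<^sup>2 * \<gamma> ^ 4) = (sqrt (128 * l) * L\<^sup>2 / (\<epsilon> * \<gamma>\<^sup>2))\<^sup>2"
    using l ln2_ge_two_thirds by (simp add: power_divide power_mult_distrib power_mult[symmetric])
  then have sq: "sqrt (128 * l) * L\<^sup>2 / (\<epsilon> * \<gamma>\<^sup>2) \<le> sqrt M"
    using Mb l \<epsilon> L0 ln2_ge_two_thirds by (simp add: l_def real_le_rsqrt)
  have key: "1 + sqrt (2 * ln (1 / \<delta>)) \<le> 0.167 * sqrt (128 * l)"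
    unfolding l(1) by (rule one_plus_sqrt_le[OF l(2)])
  have pos: "sqrt (128 * l) > 0" using l ln2_ge_two_thirds by simp
  have "1 / sqrt M + sqrt (2 * ln (1 / \<delta>) / M) = (1 + sqrt (2 * ln (1 / \<delta>))) / sqrt M"
    using M by (simp add: real_sqrt_divide add_divide_distrib)
  also have "\<dots> \<le> 0.167 * sqrt (128 * l) / (sqrt (128 * l) * L\<^sup>2 / (\<epsilon> * \<gamma>\<^sup>2))"
    using pos \<epsilon> \<gamma> L0 by (intro frac_le[OF _ key _ sq]) auto
  also have "\<dots> = 0.167 * (\<gamma> / L)\<^sup>2 * \<epsilon>"
    using pos \<epsilon> \<gamma> L0 by (simp add: field_simps power2_eq_square)
  finally show ?thesis .
qed

theorem proposition4:
  fixes N P M :: nat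
    and D :: "nat \<Rightarrow> nat"
    and \<mu> :: "(nat \<Rightarrow> nat) \<Rightarrow> nat"
    and Dist :: "(((nat \<Rightarrow> nat) \<Rightarrow> nat \<Rightarrow> real) \<times> real) measure"
    and \<delta> \<gamma> :: real
  assumes "N > 0" and "P > 0"
    and "\<And>n. n < N ^ P \<Longrightarrow> D n > 0"
    and "bij_betw \<mu> (grid N P) {0..<N ^ P}"
    and "prob_space Dist"
    and "\<And>n j. n \<in> grid N P \<Longrightarrow> j < D (\<mu> n) \<Longrightarrow> (\<lambda>z. fst z n j) \<in> borel_measurable Dist"
    and "snd \<in> borel_measurable Dist"
    and "AE z in Dist. (\<forall>n\<in>grid N P. sqrt (\<Sum>j<D (\<mu> n). (fst z n j)\<^sup>2) \<le> 1)
                       \<and> snd z \<in> {1, -1}"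
    and "0 < \<delta>" and "\<delta> < 1" and "\<gamma> > 0"
    and "tnorm (N ^ P) D (D_pop N P \<mu> Dist) \<noteq> 0"
    and "M > 0"
    and "real M \<ge> 128 * ln (2 / \<delta>) * (ln (real (Max (DJ (N ^ P) D ` Pow {0..<N ^ P})))) ^ 4
                   / ((tnorm (N ^ P) D (D_pop N P \<mu> Dist))\<^sup>2 * \<gamma> ^ 4)"
  shows "\<exists>E \<in> sets (PiM {0..<M} (\<lambda>_. Dist)).
           E \<subseteq> {\<omega> \<in> space (PiM {0..<M} (\<lambda>_. Dist)).
                  \<forall>J \<subseteq> {0..<N ^ P}.
                    \<bar>QE (N ^ P) D (D_emp N P \<mu> M \<omega>) J - QE (N ^ P) D (D_pop N P \<mu> Dist) J\<bar> \<le> \<gamma>}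
         \<and> measure (PiM {0..<M} (\<lambda>_. Dist)) E \<ge> 1 - \<delta>"
proof -
  let ?K = "N ^ P" and ?pop = "D_pop N P \<mu> Dist" and ?\<Omega> = "PiM {0..<M} (\<lambda>_. Dist)"
  let ?L = "ln (real (Max (DJ ?K D ` Pow {0..<?K})))"
  interpret prob_space Dist by fact
  have \<epsilon>: "tnorm ?K D ?pop > 0" using assms(12) by (simp add: tnorm_def sum_nonneg order_less_le)
  obtain E where E: "E \<in> sets ?\<Omega>" "measure ?\<Omega> E \<ge> 1 - \<delta>"
    and dev: "\<And>\<omega>. \<omega> \<in> E \<Longrightarrow> L2_set (\<lambda>i. (1 / real M) * (\<Sum>m<M. data_tensor N P \<mu> (\<omega> m) i)
                  - (\<integral>z. data_tensor N P \<mu> z i \<partial>Dist)) (tidx ?K D)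
                \<le> 1 / sqrt (real M) + sqrt (2 * ln (1 / \<delta>) / real M)"
    by (rule empirical_mean_concentration[OF finite_tidx assms(13)
        data_tensor_measurable[OF assms(4,6,7)] AE_sum_sq_data_tensor_le_1[OF assms(4,8)] assms(9,10)]) auto
  have "\<bar>QE ?K D (D_emp N P \<mu> M \<omega>) J - QE ?K D ?pop J\<bar> \<le> \<gamma>" if "\<omega> \<in> E" "J \<subseteq> {0..<?K}" for \<omega> J
  proof (rule QE_diff_le[where K = ?K and D = D, OF that(2) assms(3) _ assms(11) \<epsilon>])
    have "DJ ?K D J \<le> Max (DJ ?K D ` Pow {0..<?K})" using that(2) by (intro Max_ge) auto
    then show "ln (real (DJ ?K D J)) \<le> ?L" using DJ_pos[where K = ?K and D = D, OF that(2) assms(3)] by simp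
    assume "\<gamma> < ?L"
    have "sqrt (\<Sum>i\<in>tidx ?K D. (D_emp N P \<mu> M \<omega> i - ?pop i)\<^sup>2)
        \<le> 1 / sqrt (real M) + sqrt (2 * ln (1 / \<delta>) / real M)"
      using dev[OF that(1)] by (simp add: L2_set_def D_emp_def D_pop_def)
    also have "\<dots> \<le> 0.167 * (\<gamma> / ?L)\<^sup>2 * tnorm ?K D ?pop"
      using assms(9-11,13,14) \<open>\<gamma> < ?L\<close> \<epsilon> by (intro sample_size_bound) auto
    finally show "sqrt (\<Sum>i\<in>tidx ?K D. (D_emp N P \<mu> M \<omega> i - ?pop i)\<^sup>2) \<le> 0.167 * (\<gamma> / ?L)\<^sup>2 * tnorm ?K D ?pop" .
  qed
  then show ?thesis using E sets.sets_into_space[OF E(1)] by blast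
qed

end
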